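(* Consider the linear model $\mathbf{y}=\mathbf{X}\boldsymbol\beta+\boldsymbol\epsilon$, $\boldsymbol\epsilon\sim\mathrm{N}(\mathbf 0,\sigma^2\mathbf I_n)$, with $\mathbf X^\top\mathbf X=\mathbf I_p$, coefficients partitioned into $G$ groups of cardinalities $n_1,\dots,n_G$, $\widehat{\boldsymbol\beta}^{\mathsf{LS}}=\mathbf X^\top\mathbf y$, weights $w_g=1/\|\widehat{\boldsymbol\beta}^{\mathsf{LS}}_g\|_2$, and the Adaptive Group Lasso $\widehat{\boldsymbol\beta}=\arg\min_{\boldsymbol\beta}\tfrac12\|\mathbf y-\mathbf X\boldsymbol\beta\|_2^2+\gamma\sum_g w_g\|\boldsymbol\beta_g\|_2$ with $\gamma\in(\gamma_l,\gamma_{l+1})$ for consecutive transition points. Let $\mathcal A_G=\{g:\|\widehat{\boldsymbol\beta}_g\|_2\ne0\}$. Then an unbiased estimate of the degrees of freedom of $\widehat{\mathbf y}_\gamma=\mathbf X\widehat{\boldsymbol\beta}$ is $$\widehat{df}_\gamma=\mathrm{trace}\big[(\mathbf I_n+\gamma\mathbf B)^{-1}(\mathbf A+\gamma\mathbf C)\big],$$ where $\mathbf A=\mathbf X_{\mathcal A_G}\mathbf X_{\mathcal A_G}^\top$, $\mathbf B=\mathbf X_{\mathcal A_G}\boldsymbol\Pi_{\mathcal A_G}\mathbf X_{\mathcal A_G}^\top$, $\mathbf C=\mathbf X_{\mathcal A_G}\boldsymbol\Phi_{\mathcal A_G}\mathbf X_{\mathcal A_G}^\top$, $$\boldsymbol\Pi_{\mathcal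 A_G}=\mathrm{blockdiag}_{g\in\mathcal A_G}\Big(w_g\Big[\frac{\mathbf I_{n_g}}{\|\widehat{\boldsymbol\beta}_g\|_2}-\frac{\widehat{\boldsymbol\beta}_g\widehat{\boldsymbol\beta}_g^\top}{\|\widehat{\boldsymbol\beta}_g\|_2^3}\Big]\Big),\qquad\boldsymbol\Phi_{\mathcal A_G}=\mathrm{blockdiag}_{g\in\mathcal A_G}\Big(\frac{\widehat{\boldsymbol\beta}_g}{\|\widehat{\boldsymbol\beta}_g\|_2}\frac{(\widehat{\boldsymbol\beta}^{\mathsf{LS}}_g)^\top}{\|\widehat{\boldsymbol\beta}^{\mathsf{LS}}_g\|_2^3}\Big).$$
   Context: $\boldsymbol\beta_g$, $\widehat{\boldsymbol\beta}_g$, $\widehat{\boldsymbol\beta}^{\mathsf{LS}}_g\in\mathbb R^{n_g}$ are the subvectors for group $g$; $\mathbf X_{\mathcal A_G}$ is the matrix of columns of $\mathbf X$ in active groups (group order). Degrees of freedom: $df(\widehat{\mathbf y})=\sigma^{-2}\sum_i\mathrm{Cov}(y_i,\widehat y_i)$ ($=\mathbb E[\mathrm{trace}(\partial\widehat{\mathbf y}/\partial\mathbf y)]$); an unbiased estimate is a statistic with that expectation. Transition points are the values of $\gamma>0$ where the active set changes, for fixed data. *)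

theory Defs
  imports "HOL-Probability.Probability"
begin

definition gnorm :: "('p::finite \<Rightarrow> 'g) \<Rightarrow> real^'p \<Rightarrow> 'g \<Rightarrow> real" where
  "gnorm grp v g = sqrt (\<Sum>j\<in>{j. grp j = g}. (v $ j)\<^sup>2)"

text \<open>Least squares estimate (X^T X = I).\<close>
definition betaLS :: "real^'p^'n \<Rightarrow> real^'n \<Rightarrow> real^'p" where
  "betaLS X y = transpose X *v y"

definition agl_weight :: "real^'p^'n \<Rightarrow> ('p::finite \<Rightarrow> 'g) \<Rightarrow> real^'n \<Rightarrow> 'g \<Rightarrow> real" where
  "agl_weight X grp y g = 1 / gnorm grp (betaLS X y) g"

definition agl_obj :: "real^'p^'n \<Rightarrow> ('p::finite \<Rightarrow> 'g::finite) \<Rightarrow> real \<Rightarrow> real^'n \<Rightarrow> real^'p \<Rightarrow> real" where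
  "agl_obj X grp \<gamma> y b =
     1/2 * (norm (y - X *v b))\<^sup>2 + \<gamma> * (\<Sum>g\<in>UNIV. agl_weight X grp y g * gnorm grp b g)"

definition agl_beta :: "real^'p^'n \<Rightarrow> ('p::finite \<Rightarrow> 'g::finite) \<Rightarrow> real \<Rightarrow> real^'n \<Rightarrow> real^'p" where
  "agl_beta X grp \<gamma> y = (THE b. \<forall>b'. agl_obj X grp \<gamma> y b \<le> agl_obj X grp \<gamma> y b')"

definition agl_fit :: "real^'p^'n \<Rightarrow> ('p::finite \<Rightarrow> 'g::finite) \<Rightarrow> real \<Rightarrow> real^'n \<Rightarrow> real^'n" where
  "agl_fit X grp \<gamma> y = X *v agl_beta X grp \<gamma> y"

definition agl_active :: "real^'p^'n \<Rightarrow> ('p::finite \<Rightarrow> 'g::finite) \<Rightarrow> real \<Rightarrow> real^'n \<Rightarrow> 'g set" where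
  "agl_active X grp \<gamma> y = {g. gnorm grp (agl_beta X grp \<gamma> y) g \<noteq> 0}"

text \<open>X_{A_G}: the columns of X in active groups; columns of inactive groups are
  replaced by zero columns (this does not change X_A M X_A^T for the block matrices
  below, whose blocks are indexed by the active coordinates only).\<close>
definition XA :: "real^'p^'n \<Rightarrow> ('p::finite \<Rightarrow> 'g::finite) \<Rightarrow> real \<Rightarrow> real^'n \<Rightarrow> real^'p^'n" where
  "XA X grp \<gamma> y = (\<chi> i j. if grp j \<in> agl_active X grp \<gamma> y then X $ i $ j else 0)"

definition PiA :: "real^'p^'n \<Rightarrow> ('p::finite \<Rightarrow> 'g::finite) \<Rightarrow> real \<Rightarrow> real^'n \<Rightarrow> real^'p^'p" where
  "PiA X grp \<gamma> y = (let bh = agl_beta X grp \<gamma> y in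
     (\<chi> j k. if grp j = grp k \<and> grp j \<in> agl_active X grp \<gamma> y then
        agl_weight X grp y (grp j) *
          ((if j = k then 1 else 0) / gnorm grp bh (grp j)
           - bh $ j * bh $ k / (gnorm grp bh (grp j)) ^ 3)
      else 0))"

definition PhiA :: "real^'p^'n \<Rightarrow> ('p::finite \<Rightarrow> 'g::finite) \<Rightarrow> real \<Rightarrow> real^'n \<Rightarrow> real^'p^'p" where
  "PhiA X grp \<gamma> y = (let bh = agl_beta X grp \<gamma> y; bl = betaLS X y in
     (\<chi> j k. if grp j = grp k \<and> grp j \<in> agl_active X grp \<gamma> y then
        (bh $ j / gnorm grp bh (grp j)) * (bl $ k / (gnorm grp bl (grp j)) ^ 3)
      else 0))"

definition dfhat :: "real^'p^'n \<Rightarrow> ('p::finite \<Rightarrow> 'g::finite) \<Rightarrow> real \<Rightarrow> real^'n \<Rightarrow> real" where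
  "dfhat X grp \<gamma> y = (let Xa = XA X grp \<gamma> y;
      A = Xa ** transpose Xa;
      B = Xa ** PiA X grp \<gamma> y ** transpose Xa;
      C = Xa ** PhiA X grp \<gamma> y ** transpose Xa
    in trace (matrix_inv (mat 1 + \<gamma> *\<^sub>R B) ** (A + \<gamma> *\<^sub>R C)))"

definition gauss_vec :: "real^'n::finite \<Rightarrow> real \<Rightarrow> (real^'n) measure" where
  "gauss_vec \<mu> \<sigma> = density lborel (\<lambda>y. ennreal (\<Prod>i\<in>UNIV. normal_density (\<mu> $ i) \<sigma> (y $ i)))"

definition covar :: "'a measure \<Rightarrow> ('a \<Rightarrow> real) \<Rightarrow> ('a \<Rightarrow> real) \<Rightarrow> real" where
  "covar M f g = (LINT y|M. (f y - (LINT z|M. f z)) * (g y - (LINT z|M. g z)))"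

definition dof :: "(real^'n::finite) measure \<Rightarrow> real \<Rightarrow> (real^'n \<Rightarrow> real^'n) \<Rightarrow> real" where
  "dof M \<sigma> yh = (1 / \<sigma>\<^sup>2) * (\<Sum>i\<in>UNIV. covar M (\<lambda>y. y $ i) (\<lambda>y. yh y $ i))"

end

theory Submission
  imports Defs "HOL-Real_Asymp.Real_Asymp" "HOL-Library.Quadratic_Discriminant"
begin

text \<open>With an orthonormal design the objective separates over the groups, and the adaptive group
  lasso is explicit group soft-thresholding of the least-squares estimate z = X^T y: the weight
  1 / ||z_g|| turns the threshold into the factor (1 - \<gamma> / ||z_g||^2)_+ on group g. Hence each
  fitted value is continuous and of linear growth in y, and along every coordinate line it is
  differentiable off finitely many kinks with bounded derivative, so Stein's lemma
  Cov(y_i, yhat_i) = \<sigma>^2 E[\<partial> yhat_i / \<partial> y_i] applies. The divergence of the fit is the sum over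
  the coordinates j of active groups g of 1 - \<gamma> / ||z_g||^2 + 2 \<gamma> z_j^2 / ||z_g||^4, and the trace
  formula evaluates to the same number: on an active block, B and C are built from the
  projection onto z_g, which makes (I + \<gamma> B)^-1 explicit. No restriction of \<gamma> to an interval
  between transition points is needed, since each coordinate line meets only finitely many kinks.\<close>

section \<open>Stein's lemma for Gaussian vectors\<close>

lemma normal_density_has_real_derivative:
  assumes "0 < \<sigma>"
  shows "(normal_density m \<sigma> has_real_derivative - (t - m) / \<sigma>\<^sup>2 * normal_density m \<sigma> t) (at t)"
proof -
  define c where "c = 1 / sqrt (2 * pi * \<sigma>\<^sup>2)"
  have e: "normal_density m \<sigma> = (\<lambda>t. c * exp (- (t - m)\<^sup>2 / (2 * \<sigma>\<^sup>2)))"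
    by (simp add: normal_density_def c_def fun_eq_iff)
  have "((\<lambda>t. c * exp (- (t - m)\<^sup>2 / (2 * \<sigma>\<^sup>2))) has_real_derivative
      c * (exp (- (t - m)\<^sup>2 / (2 * \<sigma>\<^sup>2)) * (- (2 * (t - m)) / (2 * \<sigma>\<^sup>2)))) (at t)"
    using assms by (auto intro!: derivative_eq_intros simp: field_simps)
  then show ?thesis unfolding e
    by (rule DERIV_cong) (use assms in \<open>simp add: field_simps\<close>)
qed

lemma lborel_integral_eq_0_if_antiderivative_vanishes:
  fixes W H :: "real \<Rightarrow> real"
  assumes W: "integrable lborel W" and S: "finite S" and H: "continuous_on UNIV H"
    and H': "\<And>t. t \<notin> S \<Longrightarrow> (H has_real_derivative W t) (at t)"
    and top: "(H \<longlongrightarrow> 0) at_top" and bot: "(H \<longlongrightarrow> 0) at_bot"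
  shows "(\<integral>t. W t \<partial>lborel) = 0"
proof -
  define r :: "nat \<Rightarrow> real" where "r k = real k + 1" for k
  have r_top: "filterlim r at_top sequentially" and r_bot: "filterlim (\<lambda>k. - r k) at_bot sequentially"
    unfolding r_def by real_asymp+
  have Icc: "(LBINT t=ereal (- r k)..ereal (r k). W t) = H (r k) - H (- r k)" for k
  proof -
    have "(W has_integral H (r k) - H (- r k)) {- r k..r k}"
      using H' by (intro fundamental_theorem_of_calculus_interior_strong[OF S])
        (auto simp: r_def has_real_derivative_iff_has_vector_derivative[symmetric]
          intro: continuous_on_subset[OF H])
    moreover have "set_integrable lborel {- r k..r k} W"
      unfolding set_integrable_def using W by (intro integrable_mult_indicator) auto
    ultimately show ?thesis
      by (simp add: r_def interval_integral_Icc set_borel_integral_eq_integral(2) integral_unique)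
  qed
  have "(\<lambda>k. LBINT t=ereal (- r k)..ereal (r k). W t) \<longlonglongrightarrow> (LBINT t=-\<infinity>..\<infinity>. W t)"
  proof (rule interval_integral_Icc_approx_integrable)
    have "x \<in> (\<Union>k. {- r k .. r k})" for x
    proof -
      obtain k :: nat where "\<bar>x\<bar> \<le> real k" using real_arch_simple by blast
      then show ?thesis by (intro UN_I[of k]) (auto simp: r_def)
    qed
    then show "einterval (-\<infinity>) \<infinity> = (\<Union>k. {- r k .. r k})" by (auto simp: einterval_def)
    show "(\<lambda>k. ereal (- r k)) \<longlonglongrightarrow> -\<infinity>" and "(\<lambda>k. ereal (r k)) \<longlonglongrightarrow> \<infinity>"
      using r_bot r_top by (simp_all add: ereal_tendsto_simps2[unfolded comp_def])
    show "set_integrable lborel (einterval (- \<infinity>) \<infinity>) W"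
      using W by (simp add: set_integrable_def)
  qed (auto simp: r_def incseq_def decseq_def)
  moreover have "(\<lambda>k. H (r k) - H (- r k)) \<longlonglongrightarrow> 0"
    using tendsto_diff[OF filterlim_compose[OF top r_top] filterlim_compose[OF bot r_bot]] by simp
  ultimately have "(LBINT t=-\<infinity>..\<infinity>. W t) = 0"
    using LIMSEQ_unique Icc by simp
  then show ?thesis
    by (simp add: interval_lebesgue_integral_def einterval_def set_lebesgue_integral_def)
qed

lemma integrable_normal_density_linear_growth:
  fixes f :: "real \<Rightarrow> real"
  assumes \<sigma>: "0 < \<sigma>" and f_meas: "f \<in> borel_measurable borel"
    and f_growth: "\<And>t. \<bar>f t\<bar> \<le> A + B * \<bar>t\<bar>"
  shows "integrable lborel (\<lambda>t. normal_density m \<sigma> t * ((t - m) * f t))"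
proof (rule Bochner_Integration.integrable_bound)
  let ?\<phi> = "normal_density m \<sigma>"
  let ?F = "\<lambda>t. (\<bar>A\<bar> + \<bar>B\<bar> * \<bar>m\<bar>) * (?\<phi> t * \<bar>t - m\<bar> ^ 1) + \<bar>B\<bar> * (?\<phi> t * \<bar>t - m\<bar> ^ 2)"
  show "integrable lborel ?F"
    using integrable_normal_moment_abs[OF \<sigma>] by (intro Bochner_Integration.integrable_add integrable_mult_right)
  show "(\<lambda>t. ?\<phi> t * ((t - m) * f t)) \<in> borel_measurable lborel"
    using f_meas by measurable
  show "AE t in lborel. norm (?\<phi> t * ((t - m) * f t)) \<le> norm (?F t)"
  proof (rule AE_I2)
    fix t
    have "B * \<bar>t\<bar> \<le> \<bar>B\<bar> * (\<bar>m\<bar> + \<bar>t - m\<bar>)"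
      using abs_triangle_ineq[of m "t - m"]
      by (intro order_trans[OF mult_right_mono[OF abs_ge_self abs_ge_zero] mult_left_mono]) auto
    then have "\<bar>f t\<bar> \<le> \<bar>A\<bar> + \<bar>B\<bar> * \<bar>m\<bar> + \<bar>B\<bar> * \<bar>t - m\<bar>"
      using f_growth[of t] abs_ge_self[of A] by (simp add: distrib_left)
    then have "?\<phi> t * \<bar>t - m\<bar> * \<bar>f t\<bar> \<le> ?\<phi> t * \<bar>t - m\<bar> * (\<bar>A\<bar> + \<bar>B\<bar> * \<bar>m\<bar> + \<bar>B\<bar> * \<bar>t - m\<bar>)"
      by (intro mult_left_mono) auto
    also have "\<dots> = ?F t"
      by (simp add: algebra_simps power2_eq_square)
    finally show "norm (?\<phi> t * ((t - m) * f t)) \<le> norm (?F t)"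
      by (simp add: abs_mult)
  qed
qed

lemma stein_identity_normal:
  fixes f f' :: "real \<Rightarrow> real"
  assumes \<sigma>: "0 < \<sigma>" and S: "finite S" and f: "continuous_on UNIV f"
    and f': "\<And>t. t \<notin> S \<Longrightarrow> (f has_real_derivative f' t) (at t)"
    and f'_meas: "f' \<in> borel_measurable borel" and f'_bound: "\<And>t. \<bar>f' t\<bar> \<le> K"
    and f_growth: "\<And>t. \<bar>f t\<bar> \<le> A + B * \<bar>t\<bar>"
  shows "integrable lborel (\<lambda>t. normal_density m \<sigma> t * ((t - m) * f t))"
    and "integrable lborel (\<lambda>t. normal_density m \<sigma> t * f' t)"
    and "(\<integral>t. normal_density m \<sigma> t * ((t - m) * f t) \<partial>lborel)
       = \<sigma>\<^sup>2 * (\<integral>t. normal_density m \<sigma> t * f' t \<partial>lborel)"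
proof -
  let ?\<phi> = "normal_density m \<sigma>"
  show int1: "integrable lborel (\<lambda>t. ?\<phi> t * ((t - m) * f t))"
    using \<sigma> borel_measurable_continuous_onI[OF f] f_growth by (rule integrable_normal_density_linear_growth)
  show int2: "integrable lborel (\<lambda>t. ?\<phi> t * f' t)"
  proof (rule Bochner_Integration.integrable_bound)
    show "integrable lborel (\<lambda>t. K * ?\<phi> t)" using \<sigma> by simp
    show "(\<lambda>t. ?\<phi> t * f' t) \<in> borel_measurable lborel" using f'_meas by measurable
    show "AE t in lborel. norm (?\<phi> t * f' t) \<le> norm (K * ?\<phi> t)"
    proof (rule AE_I2)
      fix t
      have "?\<phi> t * \<bar>f' t\<bar> \<le> ?\<phi> t * K" by (intro mult_left_mono f'_bound) simp
      then show "norm (?\<phi> t * f' t) \<le> norm (K * ?\<phi> t)"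
        using order_trans[OF abs_ge_zero f'_bound] by (simp add: abs_mult mult_ac)
    qed
  qed
  txt \<open>Since \<sigma>^2 \<phi>' t = - (t - m) \<phi> t, the function \<sigma>^2 \<phi> f is an antiderivative of
    \<sigma>^2 \<phi> f' - (t - m) \<phi> f off S, and it vanishes at both infinities.\<close>
  define H where "H t = \<sigma>\<^sup>2 * ?\<phi> t * f t" for t
  have "(\<integral>t. \<sigma>\<^sup>2 * (?\<phi> t * f' t) - ?\<phi> t * ((t - m) * f t) \<partial>lborel) = 0"
  proof (rule lborel_integral_eq_0_if_antiderivative_vanishes[OF _ S])
    show "integrable lborel (\<lambda>t. \<sigma>\<^sup>2 * (?\<phi> t * f' t) - ?\<phi> t * ((t - m) * f t))"
      using int1 int2 by auto
    show "continuous_on UNIV H"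
      unfolding H_def using f DERIV_continuous_on[OF normal_density_has_real_derivative[OF \<sigma>]]
      by (intro continuous_intros) auto
    show "(H has_real_derivative \<sigma>\<^sup>2 * (?\<phi> t * f' t) - ?\<phi> t * ((t - m) * f t)) (at t)"
      if "t \<notin> S" for t
      unfolding H_def
      by (rule derivative_eq_intros normal_density_has_real_derivative[OF \<sigma>] f'[OF that] refl)+
        (use \<sigma> in \<open>simp add: field_simps\<close>)
    have H_bound: "norm (H t) \<le> \<sigma>\<^sup>2 / sqrt (2 * pi * \<sigma>\<^sup>2) * (exp (- (t - m)\<^sup>2 / (2 * \<sigma>\<^sup>2)) * (A + B * \<bar>t\<bar>))" for t
      using mult_left_mono[OF f_growth[of t], of "\<sigma>\<^sup>2 * ?\<phi> t"]
      by (simp add: H_def abs_mult normal_density_def)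
    show "(H \<longlongrightarrow> 0) at_top" "(H \<longlongrightarrow> 0) at_bot"
      by (rule Lim_null_comparison[OF always_eventually[OF allI[OF H_bound]]], use \<sigma> in real_asymp)+
  qed
  then show "(\<integral>t. ?\<phi> t * ((t - m) * f t) \<partial>lborel) = \<sigma>\<^sup>2 * (\<integral>t. ?\<phi> t * f' t \<partial>lborel)"
    using int1 int2 by simp
qed

definition normal_PiM :: "('n::finite \<Rightarrow> real) \<Rightarrow> real \<Rightarrow> ('n \<Rightarrow> real) measure" where
  "normal_PiM \<mu> \<sigma> = PiM UNIV (\<lambda>i. density lborel (normal_density (\<mu> i) \<sigma>))"

lemma product_prob_space_normal:
  "0 < \<sigma> \<Longrightarrow> product_prob_space (\<lambda>i. density lborel (normal_density (\<mu> i) \<sigma>))"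
  unfolding product_prob_space_def product_prob_space_axioms_def product_sigma_finite_def
  using prob_space_normal_density prob_space_imp_sigma_finite by blast

lemma prob_space_normal_PiM:
  assumes "0 < \<sigma>"
  shows "prob_space (normal_PiM \<mu> \<sigma>)"
proof -
  interpret product_prob_space "\<lambda>i. density lborel (normal_density (\<mu> i) \<sigma>)" UNIV
    using assms by (rule product_prob_space_normal)
  show ?thesis unfolding normal_PiM_def by (rule prob_space_P) auto
qed

lemma sets_normal_PiM: "sets (normal_PiM \<mu> \<sigma>) = sets (PiM UNIV (\<lambda>_. lborel))"
  unfolding normal_PiM_def by (intro sets_PiM_cong) simp_all

lemma normal_PiM_component:
  fixes \<mu> :: "'n::finite \<Rightarrow> real"
  assumes \<sigma>: "0 < \<sigma>" and g: "g \<in> borel_measurable borel"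
    and int: "integrable lborel (\<lambda>t. normal_density (\<mu> k) \<sigma> t * g t)"
  shows "integrable (normal_PiM \<mu> \<sigma>) (\<lambda>f. g (f k))"
    and "(\<integral>f. g (f k) \<partial>normal_PiM \<mu> \<sigma>) = (\<integral>t. normal_density (\<mu> k) \<sigma> t * g t \<partial>lborel)"
proof -
  let ?N = "density lborel (normal_density (\<mu> k) \<sigma>)"
  have distr: "distr (normal_PiM \<mu> \<sigma>) ?N (\<lambda>f. f k) = ?N"
    unfolding normal_PiM_def
    by (rule product_prob_space.PiM_component[OF product_prob_space_normal[OF \<sigma>]]) simp
  have meas: "(\<lambda>f. f k) \<in> measurable (normal_PiM \<mu> \<sigma>) ?N"
    unfolding normal_PiM_def by (rule measurable_component_singleton) simp
  have "integrable ?N g"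
    using int g by (subst integrable_density) auto
  then show "integrable (normal_PiM \<mu> \<sigma>) (\<lambda>f. g (f k))"
    using g by (subst integrable_distr_eq[OF meas, symmetric]) (auto simp: distr)
  have "(\<integral>f. g (f k) \<partial>normal_PiM \<mu> \<sigma>) = (\<integral>t. g t \<partial>?N)"
    using g by (subst integral_distr[OF meas, symmetric]) (auto simp: distr)
  also have "\<dots> = (\<integral>t. normal_density (\<mu> k) \<sigma> t * g t \<partial>lborel)"
    using g by (subst integral_density) auto
  finally show "(\<integral>f. g (f k) \<partial>normal_PiM \<mu> \<sigma>) = (\<integral>t. normal_density (\<mu> k) \<sigma> t * g t \<partial>lborel)" .
qed

lemma normal_PiM_moments:
  assumes \<sigma>: "0 < \<sigma>"
  shows "integrable (normal_PiM \<mu> \<sigma>) (\<lambda>f. f k)"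
    and "integrable (normal_PiM \<mu> \<sigma>) (\<lambda>f. (f k - \<mu> k)\<^sup>2)"
    and "(\<integral>f. f k \<partial>normal_PiM \<mu> \<sigma>) = \<mu> k"
proof -
  note first = normal_PiM_component[OF \<sigma>, of "\<lambda>t. t" \<mu> k]
  show "integrable (normal_PiM \<mu> \<sigma>) (\<lambda>f. f k)" "(\<integral>f. f k \<partial>normal_PiM \<mu> \<sigma>) = \<mu> k"
    using first integrable_normal_moment_nz_1[OF \<sigma>] integral_normal_moment_nz_1[OF \<sigma>] by simp_all
  show "integrable (normal_PiM \<mu> \<sigma>) (\<lambda>f. (f k - \<mu> k)\<^sup>2)"
    using normal_PiM_component(1)[OF \<sigma>, of "\<lambda>t. (t - \<mu> k)\<^sup>2" \<mu> k] integrable_normal_moment[OF \<sigma>, of _ 2]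
    by simp
qed

lemma integrable_normal_PiM_centered_linear_growth:
  fixes \<mu> :: "'n::finite \<Rightarrow> real"
  assumes \<sigma>: "0 < \<sigma>" and g: "g \<in> borel_measurable (normal_PiM \<mu> \<sigma>)"
    and growth: "\<And>f. \<bar>g f\<bar> \<le> A + B * (\<Sum>k\<in>UNIV. \<bar>f k - \<mu> k\<bar>)"
  shows "integrable (normal_PiM \<mu> \<sigma>) (\<lambda>f. (f i - \<mu> i) * g f)"
proof (rule Bochner_Integration.integrable_bound)
  let ?d = "\<lambda>f k. f k - \<mu> k"
  let ?F = "\<lambda>f. \<bar>A\<bar> * (1 + (?d f i)\<^sup>2) + \<bar>B\<bar> * (\<Sum>k\<in>UNIV. (?d f i)\<^sup>2 + (?d f k)\<^sup>2)"
  show "integrable (normal_PiM \<mu> \<sigma>) ?F"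
    using normal_PiM_moments(2)[OF \<sigma>]
      finite_measure.integrable_const[OF prob_space.finite_measure[OF prob_space_normal_PiM[OF \<sigma>]]]
    by (intro Bochner_Integration.integrable_add integrable_mult_right Bochner_Integration.integrable_sum) auto
  show "(\<lambda>f. (f i - \<mu> i) * g f) \<in> borel_measurable (normal_PiM \<mu> \<sigma>)"
    using g by (simp add: measurable_cong_sets[OF sets_normal_PiM refl])
  show "AE f in normal_PiM \<mu> \<sigma>. norm ((f i - \<mu> i) * g f) \<le> norm (?F f)"
  proof (rule AE_I2)
    fix f
    have abs_le: "\<bar>x\<bar> \<le> 1 + x\<^sup>2" for x :: real
      using sum_squares_bound[of 1 "\<bar>x\<bar>"] by simp
    have abs_mult_le: "\<bar>x\<bar> * \<bar>y\<bar> \<le> x\<^sup>2 + y\<^sup>2" for x y :: real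
    proof -
      have "2 * (\<bar>x\<bar> * \<bar>y\<bar>) \<le> x\<^sup>2 + y\<^sup>2"
        using sum_squares_bound[of "\<bar>x\<bar>" "\<bar>y\<bar>"] by (simp add: mult.assoc)
      moreover have "0 \<le> \<bar>x\<bar> * \<bar>y\<bar>" by simp
      ultimately show ?thesis by linarith
    qed
    have "\<bar>g f\<bar> \<le> \<bar>A\<bar> + \<bar>B\<bar> * (\<Sum>k\<in>UNIV. \<bar>?d f k\<bar>)"
      using growth[of f] mult_right_mono[OF abs_ge_self[of B], of "\<Sum>k\<in>UNIV. \<bar>?d f k\<bar>"] abs_ge_self[of A]
      by (simp add: sum_nonneg)
    then have "\<bar>?d f i * g f\<bar> \<le> \<bar>?d f i\<bar> * (\<bar>A\<bar> + \<bar>B\<bar> * (\<Sum>k\<in>UNIV. \<bar>?d f k\<bar>))"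
      unfolding abs_mult by (intro mult_left_mono) simp_all
    also have "\<dots> = \<bar>A\<bar> * \<bar>?d f i\<bar> + \<bar>B\<bar> * (\<Sum>k\<in>UNIV. \<bar>?d f i\<bar> * \<bar>?d f k\<bar>)"
      by (simp add: algebra_simps sum_distrib_left)
    also have "\<dots> \<le> ?F f"
      by (intro add_mono mult_left_mono sum_mono abs_le abs_mult_le) simp_all
    finally show "norm ((f i - \<mu> i) * g f) \<le> norm (?F f)"
      by (simp add: sum_nonneg)
  qed
qed

lemma stein_identity_normal_PiM:
  fixes \<mu> :: "'n::finite \<Rightarrow> real" and h D :: "('n \<Rightarrow> real) \<Rightarrow> real"
  assumes \<sigma>: "0 < \<sigma>"
    and h_meas: "h \<in> borel_measurable (normal_PiM \<mu> \<sigma>)" and D_meas: "D \<in> borel_measurable (normal_PiM \<mu> \<sigma>)"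
    and D_bound: "\<And>f. \<bar>D f\<bar> \<le> K"
    and int: "integrable (normal_PiM \<mu> \<sigma>) (\<lambda>f. (f i - \<mu> i) * h f)"
    and h_cont: "\<And>x. continuous_on UNIV (\<lambda>t. h (x(i := t)))"
    and h_deriv: "\<And>x. \<exists>S. finite S \<and> (\<forall>t. t \<notin> S \<longrightarrow>
          ((\<lambda>t. h (x(i := t))) has_real_derivative D (x(i := t))) (at t))"
    and h_growth: "\<And>x. \<exists>A B. \<forall>t. \<bar>h (x(i := t))\<bar> \<le> A + B * \<bar>t\<bar>"
  shows "integrable (normal_PiM \<mu> \<sigma>) D"
    and "(\<integral>f. (f i - \<mu> i) * h f \<partial>normal_PiM \<mu> \<sigma>) = \<sigma>\<^sup>2 * (\<integral>f. D f \<partial>normal_PiM \<mu> \<sigma>)"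
proof -
  let ?N = "\<lambda>k. density lborel (normal_density (\<mu> k) \<sigma>)"
  let ?R = "PiM (UNIV - {i}) ?N"
  interpret N: product_prob_space ?N UNIV using \<sigma> by (rule product_prob_space_normal)
  interpret P: prob_space "normal_PiM \<mu> \<sigma>" using \<sigma> by (rule prob_space_normal_PiM)
  show int_D: "integrable (normal_PiM \<mu> \<sigma>) D"
    using D_bound D_meas by (intro P.integrable_const_bound[where B=K] AE_I2) auto
  have split: "normal_PiM \<mu> \<sigma> = PiM (insert i (UNIV - {i})) ?N"
    by (simp add: normal_PiM_def insert_absorb)
  have fin: "finite (UNIV - {i})" "i \<notin> UNIV - {i}" by auto
  have line: "(\<integral>t. (t - \<mu> i) * h (x(i := t)) \<partial>?N i) = \<sigma>\<^sup>2 * (\<integral>t. D (x(i := t)) \<partial>?N i)"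
    if x: "x \<in> space ?R" for x
  proof -
    have upd: "(\<lambda>t. x(i := t)) \<in> measurable (?N i) (normal_PiM \<mu> \<sigma>)"
      unfolding split using measurable_component_update[OF x fin(2)] .
    have h_line_meas: "(\<lambda>t. h (x(i := t))) \<in> borel_measurable borel"
      using measurable_comp[OF upd h_meas] by (simp add: comp_def)
    have D_line_meas: "(\<lambda>t. D (x(i := t))) \<in> borel_measurable borel"
      using measurable_comp[OF upd D_meas] by (simp add: comp_def)
    obtain S where S: "finite S"
      and S': "\<And>t. t \<notin> S \<Longrightarrow> ((\<lambda>t. h (x(i := t))) has_real_derivative D (x(i := t))) (at t)"
      using h_deriv[of x] by blast
    obtain A B where AB: "\<And>t. \<bar>h (x(i := t))\<bar> \<le> A + B * \<bar>t\<bar>"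
      using h_growth[of x] by blast
    note stein = stein_identity_normal(3)[OF \<sigma> S h_cont S' D_line_meas D_bound AB, of "\<mu> i"]
    show ?thesis
      using h_line_meas D_line_meas by (simp add: integral_density stein)
  qed
  have "(\<integral>f. (f i - \<mu> i) * h f \<partial>normal_PiM \<mu> \<sigma>)
      = (\<integral>x. (\<integral>t. ((x(i := t)) i - \<mu> i) * h (x(i := t)) \<partial>?N i) \<partial>?R)"
    unfolding split by (rule N.product_integral_insert[OF fin]) (use int split in simp)
  also have "\<dots> = (\<integral>x. \<sigma>\<^sup>2 * (\<integral>t. D (x(i := t)) \<partial>?N i) \<partial>?R)"
    by (rule Bochner_Integration.integral_cong) (simp_all add: line)
  also have "\<dots> = \<sigma>\<^sup>2 * (\<integral>x. (\<integral>t. D (x(i := t)) \<partial>?N i) \<partial>?R)"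
    by simp
  also have "(\<integral>x. (\<integral>t. D (x(i := t)) \<partial>?N i) \<partial>?R) = (\<integral>f. D f \<partial>normal_PiM \<mu> \<sigma>)"
    unfolding split by (rule N.product_integral_insert[OF fin, symmetric]) (use int_D split in simp)
  finally show "(\<integral>f. (f i - \<mu> i) * h f \<partial>normal_PiM \<mu> \<sigma>) = \<sigma>\<^sup>2 * (\<integral>f. D f \<partial>normal_PiM \<mu> \<sigma>)" .
qed

lemma borel_measurable_vec_lambda_PiM[measurable]:
  "(vec_lambda :: ('n::finite \<Rightarrow> real) \<Rightarrow> real^'n) \<in> borel_measurable (PiM UNIV (\<lambda>_. lborel))"
proof (subst borel_measurable_euclidean_space, intro ballI)
  fix b :: "real^'n" assume "b \<in> Basis"
  then obtain i where b: "b = axis i 1" by (auto simp: Basis_vec_def)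
  have "(\<lambda>x. x i) \<in> borel_measurable (PiM UNIV (\<lambda>_. lborel :: real measure))" by measurable
  then show "(\<lambda>x. vec_lambda x \<bullet> b) \<in> borel_measurable (PiM UNIV (\<lambda>_. lborel))"
    unfolding b by (simp add: inner_axis)
qed

lemma lborel_vec_eq_distr_PiM:
  "(lborel :: (real^'n::finite) measure) = distr (PiM UNIV (\<lambda>_. lborel)) borel vec_lambda"
proof (rule lborel_eqI)
  fix l u :: "real^'n"
  assume lu_Basis: "\<And>b. b \<in> Basis \<Longrightarrow> l \<bullet> b \<le> u \<bullet> b"
  have lu: "l $ i \<le> u $ i" for i
    using lu_Basis[of "axis i 1"] by (auto simp: Basis_vec_def inner_axis)
  have box: "vec_lambda -` box l u \<inter> space (PiM UNIV (\<lambda>_. lborel)) = PiE UNIV (\<lambda>i. {l $ i <..< u $ i})"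
    by (auto simp: mem_box_cart space_PiM PiE_def extensional_def Pi_iff)
  have Basis: "(Basis :: (real^'n) set) = range (\<lambda>i. axis i 1)"
    by (auto simp: Basis_vec_def)
  have "emeasure (distr (PiM UNIV (\<lambda>_. lborel)) borel vec_lambda) (box l u)
     = emeasure (PiM UNIV (\<lambda>_. lborel)) (PiE UNIV (\<lambda>i. {l $ i <..< u $ i}))"
    by (subst emeasure_distr) (auto simp: box)
  also have "\<dots> = (\<Prod>i\<in>UNIV. emeasure lborel {l $ i <..< u $ i})"
    by (rule product_sigma_finite.emeasure_PiM)
      (auto simp: product_sigma_finite_def intro: lborel.sigma_finite_measure_axioms)
  also have "\<dots> = ennreal (\<Prod>i\<in>UNIV. u $ i - l $ i)"
    using lu by (simp add: prod_ennreal)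
  also have "(\<Prod>i\<in>UNIV. u $ i - l $ i) = (\<Prod>b\<in>Basis. (u - l) \<bullet> b)"
    unfolding Basis by (subst prod.reindex) (auto simp: inj_on_def axis_eq_axis inner_axis)
  finally show "emeasure (distr (PiM UNIV (\<lambda>_. lborel)) borel vec_lambda) (box l u) = (\<Prod>b\<in>Basis. (u - l) \<bullet> b)" .
qed simp

lemma density_PiM_lborel_normal:
  assumes \<sigma>: "0 < \<sigma>"
  shows "density (PiM UNIV (\<lambda>_. lborel)) (\<lambda>f. ennreal (\<Prod>i\<in>UNIV. normal_density (\<mu> i) \<sigma> (f i)))
     = normal_PiM (\<mu> :: 'n::finite \<Rightarrow> real) \<sigma>"
proof -
  interpret P: product_prob_space "\<lambda>i. density lborel (normal_density (\<mu> i) \<sigma>)" UNIV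
    using \<sigma> by (rule product_prob_space_normal)
  interpret L: product_sigma_finite "\<lambda>_::'n. lborel :: real measure"
    by (auto simp: product_sigma_finite_def intro: lborel.sigma_finite_measure_axioms)
  show ?thesis
    unfolding normal_PiM_def
  proof (rule P.PiM_eqI)
    show "sets (density (PiM UNIV (\<lambda>_. lborel)) (\<lambda>f. ennreal (\<Prod>i\<in>UNIV. normal_density (\<mu> i) \<sigma> (f i))))
        = sets (PiM UNIV (\<lambda>i. density lborel (normal_density (\<mu> i) \<sigma>)))"
      by (simp only: sets_density) (intro sets_PiM_cong; simp)
    fix A :: "'n \<Rightarrow> real set"
    assume "\<And>i. i \<in> UNIV \<Longrightarrow> A i \<in> sets (density lborel (normal_density (\<mu> i) \<sigma>))"
    then have A: "A i \<in> sets borel" for i by simp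
    have "emeasure (density (PiM UNIV (\<lambda>_. lborel)) (\<lambda>f. ennreal (\<Prod>i\<in>UNIV. normal_density (\<mu> i) \<sigma> (f i)))) (PiE UNIV A)
       = (\<integral>\<^sup>+ f. ennreal (\<Prod>i\<in>UNIV. normal_density (\<mu> i) \<sigma> (f i)) * indicator (PiE UNIV A) f \<partial>PiM UNIV (\<lambda>_. lborel))"
      using A by (intro emeasure_density sets_PiM_I_finite) auto
    also have "\<dots> = (\<integral>\<^sup>+ f. (\<Prod>i\<in>UNIV. ennreal (normal_density (\<mu> i) \<sigma> (f i)) * indicator (A i) (f i)) \<partial>PiM UNIV (\<lambda>_. lborel))"
      by (intro nn_integral_cong) (auto simp: prod_ennreal indicator_def prod.distrib PiE_def Pi_iff
          extensional_def split: if_splits)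
    also have "\<dots> = (\<Prod>i\<in>UNIV. (\<integral>\<^sup>+ t. ennreal (normal_density (\<mu> i) \<sigma> t) * indicator (A i) t \<partial>lborel))"
      using A by (intro L.product_nn_integral_prod) auto
    also have "\<dots> = (\<Prod>i\<in>UNIV. emeasure (density lborel (normal_density (\<mu> i) \<sigma>)) (A i))"
      using A by (simp add: emeasure_density)
    finally show "emeasure (density (PiM UNIV (\<lambda>_. lborel)) (\<lambda>f. ennreal (\<Prod>i\<in>UNIV. normal_density (\<mu> i) \<sigma> (f i)))) (PiE UNIV A)
       = (\<Prod>i\<in>UNIV. emeasure (density lborel (normal_density (\<mu> i) \<sigma>)) (A i))" .
  qed simp
qed

lemma gauss_vec_eq_distr_normal_PiM:
  assumes "0 < \<sigma>"
  shows "gauss_vec \<mu> \<sigma> = distr (normal_PiM (($) \<mu>) \<sigma>) borel vec_lambda"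
proof -
  have "gauss_vec \<mu> \<sigma> = density (distr (PiM UNIV (\<lambda>_. lborel)) borel vec_lambda)
      (\<lambda>y. ennreal (\<Prod>i\<in>UNIV. normal_density (\<mu> $ i) \<sigma> (y $ i)))"
    unfolding gauss_vec_def by (subst lborel_vec_eq_distr_PiM) simp
  also have "\<dots> = distr (density (PiM UNIV (\<lambda>_. lborel))
      (\<lambda>f. ennreal (\<Prod>i\<in>UNIV. normal_density (\<mu> $ i) \<sigma> (f i)))) borel vec_lambda"
    by (subst density_distr) auto
  finally show ?thesis
    by (simp add: density_PiM_lborel_normal[OF assms])
qed

lemma stein_identity_normal_PiM_vec:
  fixes h D :: "real^'n::finite \<Rightarrow> real" and \<mu> :: "real^'n"
  assumes \<sigma>: "0 < \<sigma>"
    and h_meas: "h \<in> borel_measurable borel" and D_meas: "D \<in> borel_measurable borel"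
    and D_bound: "\<And>y. \<bar>D y\<bar> \<le> K" and h_growth: "\<And>y. \<bar>h y\<bar> \<le> A + B * norm y"
    and h_cont: "\<And>y. continuous_on UNIV (\<lambda>t. h (y + t *\<^sub>R axis i 1))"
    and h_deriv: "\<And>y. \<exists>S. finite S \<and> (\<forall>t. t \<notin> S \<longrightarrow>
          ((\<lambda>t. h (y + t *\<^sub>R axis i 1)) has_real_derivative D (y + t *\<^sub>R axis i 1)) (at t))"
  defines "P \<equiv> normal_PiM (($) \<mu>) \<sigma>"
  shows "integrable P (\<lambda>f. (f i - \<mu> $ i) * h (vec_lambda f))"
    and "integrable P (\<lambda>f. D (vec_lambda f))"
    and "(\<integral>f. (f i - \<mu> $ i) * h (vec_lambda f) \<partial>P) = \<sigma>\<^sup>2 * (\<integral>f. D (vec_lambda f) \<partial>P)"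
proof -
  have vec: "vec_lambda \<in> borel_measurable P"
    unfolding P_def by (simp add: measurable_cong_sets[OF sets_normal_PiM refl])
  have h_P: "(\<lambda>f. h (vec_lambda f)) \<in> borel_measurable P" and D_P: "(\<lambda>f. D (vec_lambda f)) \<in> borel_measurable P"
    using measurable_comp[OF vec h_meas] measurable_comp[OF vec D_meas] by (simp_all add: comp_def)
  have B_mono: "B * norm x \<le> \<bar>B\<bar> * r" if "norm x \<le> r" for x :: "real^'n" and r
    using that by (rule order_trans[OF mult_right_mono[OF abs_ge_self norm_ge_zero] mult_left_mono[OF _ abs_ge_zero]])
  have growth: "\<bar>h (vec_lambda f)\<bar> \<le> (\<bar>A\<bar> + \<bar>B\<bar> * norm \<mu>) + \<bar>B\<bar> * (\<Sum>k\<in>UNIV. \<bar>f k - \<mu> $ k\<bar>)" for f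
  proof -
    have "norm (vec_lambda f) \<le> norm \<mu> + (\<Sum>k\<in>UNIV. \<bar>f k - \<mu> $ k\<bar>)"
      using norm_triangle_sub[of "vec_lambda f" \<mu>] norm_le_l1_cart[of "vec_lambda f - \<mu>"] by simp
    then show ?thesis
      using h_growth[of "vec_lambda f"] abs_ge_self[of A] B_mono by (fastforce simp: algebra_simps)
  qed
  show int_h: "integrable P (\<lambda>f. (f i - \<mu> $ i) * h (vec_lambda f))"
    unfolding P_def using integrable_normal_PiM_centered_linear_growth[OF \<sigma> h_P[unfolded P_def] growth] .
  define base :: "('n \<Rightarrow> real) \<Rightarrow> real^'n" where "base x = vec_lambda (x(i := 0))" for x
  have line: "vec_lambda (x(i := t)) = base x + t *\<^sub>R axis i 1" for x t
    by (simp add: base_def vec_eq_iff axis_def)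
  have line_growth: "\<exists>A B. \<forall>t. \<bar>h (vec_lambda (x(i := t)))\<bar> \<le> A + B * \<bar>t\<bar>" for x
  proof (intro exI allI)
    fix t
    have "norm (vec_lambda (x(i := t))) \<le> norm (base x) + \<bar>t\<bar>"
      unfolding line using norm_triangle_ineq[of "base x" "t *\<^sub>R axis i 1"] by simp
    then show "\<bar>h (vec_lambda (x(i := t)))\<bar> \<le> (\<bar>A\<bar> + \<bar>B\<bar> * norm (base x)) + \<bar>B\<bar> * \<bar>t\<bar>"
      using h_growth[of "vec_lambda (x(i := t))"] abs_ge_self[of A] B_mono by (fastforce simp: algebra_simps)
  qed
  have line_cont: "continuous_on UNIV (\<lambda>t. h (vec_lambda (x(i := t))))" for x
    unfolding line by (rule h_cont)
  have line_deriv: "\<exists>S. finite S \<and> (\<forall>t. t \<notin> S \<longrightarrow>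
      ((\<lambda>t. h (vec_lambda (x(i := t)))) has_real_derivative D (vec_lambda (x(i := t)))) (at t))" for x
    unfolding line by (rule h_deriv)
  show "integrable P (\<lambda>f. D (vec_lambda f))"
    and "(\<integral>f. (f i - \<mu> $ i) * h (vec_lambda f) \<partial>P) = \<sigma>\<^sup>2 * (\<integral>f. D (vec_lambda f) \<partial>P)"
    using stein_identity_normal_PiM[OF \<sigma> h_P[unfolded P_def] D_P[unfolded P_def] D_bound
        int_h[unfolded P_def] line_cont line_deriv line_growth]
    unfolding P_def by simp_all
qed

lemma covar_distr:
  assumes T: "T \<in> measurable M N" and f: "f \<in> borel_measurable N" and g: "g \<in> borel_measurable N"
  shows "covar (distr M N T) f g = covar M (\<lambda>x. f (T x)) (\<lambda>x. g (T x))"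
  using f g by (simp add: covar_def integral_distr[OF T])

lemma (in prob_space) covar_eq_integral_centered:
  assumes "integrable M f" and "integrable M (\<lambda>x. (f x - expectation f) * g x)"
  shows "covar M f g = expectation (\<lambda>x. (f x - expectation f) * g x)"
proof -
  have "covar M f g = expectation (\<lambda>x. (f x - expectation f) * g x - expectation g * (f x - expectation f))"
    unfolding covar_def by (simp add: algebra_simps)
  also have "\<dots> = expectation (\<lambda>x. (f x - expectation f) * g x)"
    using assms by (simp add: prob_space)
  finally show ?thesis .
qed

lemma stein_covariance_gauss_vec:
  fixes h D :: "real^'n::finite \<Rightarrow> real" and \<mu> :: "real^'n"
  assumes \<sigma>: "0 < \<sigma>"
    and h_meas: "h \<in> borel_measurable borel" and D_meas: "D \<in> borel_measurable borel"
    and D_bound: "\<And>y. \<bar>D y\<bar> \<le> K" and h_growth: "\<And>y. \<bar>h y\<bar> \<le> A + B * norm y"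
    and h_cont: "\<And>y. continuous_on UNIV (\<lambda>t. h (y + t *\<^sub>R axis i 1))"
    and h_deriv: "\<And>y. \<exists>S. finite S \<and> (\<forall>t. t \<notin> S \<longrightarrow>
          ((\<lambda>t. h (y + t *\<^sub>R axis i 1)) has_real_derivative D (y + t *\<^sub>R axis i 1)) (at t))"
  shows "integrable (gauss_vec \<mu> \<sigma>) D"
    and "covar (gauss_vec \<mu> \<sigma>) (\<lambda>y. y $ i) h = \<sigma>\<^sup>2 * (\<integral>y. D y \<partial>gauss_vec \<mu> \<sigma>)"
proof -
  define P where "P = normal_PiM (($) \<mu>) \<sigma>"
  interpret P: prob_space P unfolding P_def using \<sigma> by (rule prob_space_normal_PiM)
  have G: "gauss_vec \<mu> \<sigma> = distr P borel vec_lambda"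
    unfolding P_def using \<sigma> by (rule gauss_vec_eq_distr_normal_PiM)
  have vec: "vec_lambda \<in> borel_measurable P"
    unfolding P_def by (simp add: measurable_cong_sets[OF sets_normal_PiM refl])
  note stein = stein_identity_normal_PiM_vec[OF \<sigma> h_meas D_meas D_bound h_growth h_cont h_deriv,
      where \<mu> = \<mu>, folded P_def]
  have mean: "(\<integral>f. f i \<partial>P) = \<mu> $ i" and int_i: "integrable P (\<lambda>f. f i)"
    using normal_PiM_moments[OF \<sigma>, of "($) \<mu>" i] by (simp_all add: P_def)
  show "integrable (gauss_vec \<mu> \<sigma>) D"
    unfolding G using stein(2) D_meas by (simp add: integrable_distr_eq[OF vec])
  have "covar (gauss_vec \<mu> \<sigma>) (\<lambda>y. y $ i) h = covar P (\<lambda>f. f i) (\<lambda>f. h (vec_lambda f))"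
    unfolding G using h_meas by (simp add: covar_distr[OF vec])
  also have "\<dots> = (\<integral>f. (f i - \<mu> $ i) * h (vec_lambda f) \<partial>P)"
    using int_i stein(1) by (simp add: P.covar_eq_integral_centered mean)
  also have "\<dots> = \<sigma>\<^sup>2 * (\<integral>y. D y \<partial>gauss_vec \<mu> \<sigma>)"
    unfolding G using D_meas by (simp add: stein(3) integral_distr[OF vec])
  finally show "covar (gauss_vec \<mu> \<sigma>) (\<lambda>y. y $ i) h = \<sigma>\<^sup>2 * (\<integral>y. D y \<partial>gauss_vec \<mu> \<sigma>)" .
qed

section \<open>The adaptive group lasso under an orthonormal design\<close>

definition gnorm_sq :: "('p::finite \<Rightarrow> 'g) \<Rightarrow> real^'p \<Rightarrow> 'g \<Rightarrow> real" where
  "gnorm_sq grp v g = (\<Sum>j\<in>{j. grp j = g}. (v $ j)\<^sup>2)"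

lemma gnorm_eq_sqrt_gnorm_sq: "gnorm grp v g = sqrt (gnorm_sq grp v g)"
  by (simp add: gnorm_def gnorm_sq_def)

lemma gnorm_sq_nonneg[simp]: "0 \<le> gnorm_sq grp v g"
  by (simp add: gnorm_sq_def sum_nonneg)

text \<open>For q = ||z_g||^2 and the adaptive weight 1 / ||z_g||, the group soft-thresholding factor
  (1 - \<gamma> w_g / ||z_g||)_+ of the paper becomes (1 - \<gamma> / q)_+. If z_g = 0, the weight is the
  junk value 1 / 0 = 0, but the minimiser is 0 on that group all the same.\<close>
definition shrinkage :: "real \<Rightarrow> real \<Rightarrow> real" where
  "shrinkage \<gamma> q = (if \<gamma> < q then 1 - \<gamma> / q else 0)"

lemma shrinkage_bounds: "0 < \<gamma> \<Longrightarrow> 0 \<le> shrinkage \<gamma> q \<and> shrinkage \<gamma> q \<le> 1"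
  by (auto simp: shrinkage_def field_simps)

definition agl_closed_form :: "real^'p^'n \<Rightarrow> ('p::finite \<Rightarrow> 'g) \<Rightarrow> real \<Rightarrow> real^'n \<Rightarrow> real^'p" where
  "agl_closed_form X grp \<gamma> y =
     (\<chi> j. shrinkage \<gamma> (gnorm_sq grp (betaLS X y) (grp j)) * betaLS X y $ j)"

lemma agl_closed_form_nth:
  "agl_closed_form X grp \<gamma> y $ j = shrinkage \<gamma> (gnorm_sq grp (betaLS X y) (grp j)) * betaLS X y $ j"
  by (simp add: agl_closed_form_def)

lemma quadratic_excess_at_multiple:
  fixes z b :: "'a \<Rightarrow> real"
  shows "(\<Sum>j\<in>J. 1/2 * (b j)\<^sup>2 - z j * b j) - (\<Sum>j\<in>J. 1/2 * (c * z j)\<^sup>2 - z j * (c * z j))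
      - 1/2 * (\<Sum>j\<in>J. (b j - c * z j)\<^sup>2)
    = (1 - c) * (c * (\<Sum>j\<in>J. (z j)\<^sup>2) - (\<Sum>j\<in>J. z j * b j))"
proof -
  have "(\<Sum>j\<in>J. 1/2 * (b j)\<^sup>2 - z j * b j) - (\<Sum>j\<in>J. 1/2 * (c * z j)\<^sup>2 - z j * (c * z j))
      - 1/2 * (\<Sum>j\<in>J. (b j - c * z j)\<^sup>2)
    = (\<Sum>j\<in>J. (1/2 * (b j)\<^sup>2 - z j * b j) - (1/2 * (c * z j)\<^sup>2 - z j * (c * z j))
        - 1/2 * (b j - c * z j)\<^sup>2)"
    by (simp add: sum_subtractf sum_distrib_left)
  also have "\<dots> = (\<Sum>j\<in>J. (1 - c) * (c * (z j)\<^sup>2 - z j * b j))"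
    by (rule sum.cong) (simp_all add: power2_eq_square algebra_simps)
  also have "\<dots> = (1 - c) * (c * (\<Sum>j\<in>J. (z j)\<^sup>2) - (\<Sum>j\<in>J. z j * b j))"
    by (simp only: sum_distrib_left[symmetric] sum_subtractf)
  finally show ?thesis .
qed

lemma group_soft_threshold_optimal:
  fixes z b :: "'a \<Rightarrow> real" and J :: "'a set"
  assumes \<gamma>: "0 < \<gamma>"
  defines "S \<equiv> \<Sum>j\<in>J. (z j)\<^sup>2"
  defines "c \<equiv> shrinkage \<gamma> S"
  shows "(\<Sum>j\<in>J. 1/2 * (c * z j)\<^sup>2 - z j * (c * z j)) + \<gamma> / sqrt S * sqrt (\<Sum>j\<in>J. (c * z j)\<^sup>2)
      + 1/2 * (\<Sum>j\<in>J. (b j - c * z j)\<^sup>2)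
    \<le> (\<Sum>j\<in>J. 1/2 * (b j)\<^sup>2 - z j * b j) + \<gamma> / sqrt S * sqrt (\<Sum>j\<in>J. (b j)\<^sup>2)"
proof -
  let ?B = "sqrt (\<Sum>j\<in>J. (b j)\<^sup>2)" and ?Z = "\<Sum>j\<in>J. z j * b j"
  have S: "0 \<le> S" and sqrt_S: "sqrt S * sqrt S = S"
    by (simp_all add: S_def sum_nonneg)
  have c: "0 \<le> c" using shrinkage_bounds[OF \<gamma>] by (simp add: c_def)
  have cauchy_schwarz: "?Z \<le> sqrt S * ?B"
  proof -
    have "?Z \<le> (\<Sum>j\<in>J. \<bar>z j\<bar> * \<bar>b j\<bar>)"
      by (intro sum_mono) (simp add: abs_mult[symmetric])
    also have "\<dots> \<le> L2_set z J * L2_set b J" by (rule L2_set_mult_ineq)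
    finally show ?thesis by (simp add: L2_set_def S_def)
  qed
  have norm_cz: "sqrt (\<Sum>j\<in>J. (c * z j)\<^sup>2) = c * sqrt S"
    using c by (simp add: S_def power_mult_distrib real_sqrt_mult flip: sum_distrib_left)
  have "0 \<le> \<gamma> / sqrt S * (?B - c * sqrt S) + (1 - c) * (c * S - ?Z)"
  proof (cases "\<gamma> < S")
    case True
    then have "\<gamma> / sqrt S * (?B - c * sqrt S) + (1 - c) * (c * S - ?Z) = \<gamma> / S * (sqrt S * ?B - ?Z)"
      using \<gamma> sqrt_S by (simp add: c_def shrinkage_def field_simps)
    then show ?thesis
      using cauchy_schwarz \<gamma> S by simp
  next
    case False
    have "sqrt S * ?B \<le> \<gamma> / sqrt S * ?B"
    proof (cases "S = 0")
      case False
      then have "sqrt S \<le> \<gamma> / sqrt S"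
        using \<open>\<not> \<gamma> < S\<close> S sqrt_S by (simp add: field_simps)
      then show ?thesis using mult_right_mono[of "sqrt S" "\<gamma> / sqrt S" ?B] by (simp add: sum_nonneg)
    qed simp
    then show ?thesis
      using False cauchy_schwarz by (simp add: c_def shrinkage_def)
  qed
  then show ?thesis
    using quadratic_excess_at_multiple[where b = b and z = z and c = c and J = J] norm_cz by (simp add: S_def algebra_simps)
qed

lemma inner_matrix_vector_mult: "y \<bullet> (X *v b) = (transpose X *v y) \<bullet> (b :: real^'p::finite)"
  for X :: "real^'p^'n::finite"
  by (simp add: inner_vec_def matrix_vector_mult_def transpose_def sum_distrib_left
      sum_distrib_right mult_ac sum.swap[where A = "UNIV :: 'n set"])

lemma sum_UNIV_by_group:
  fixes h :: "'p::finite \<Rightarrow> real" and grp :: "'p \<Rightarrow> 'g::finite"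
  shows "(\<Sum>j\<in>UNIV. h j) = (\<Sum>g\<in>UNIV. \<Sum>j\<in>{j. grp j = g}. h j)"
  using sum.group[of "UNIV :: 'p set" "UNIV :: 'g set" grp h] by simp

lemma agl_obj_eq_sum_groups:
  fixes X :: "real^'p::finite^'n::finite" and grp :: "'p \<Rightarrow> 'g::finite" and y :: "real^'n"
  assumes XX: "transpose X ** X = mat 1"
  defines "z \<equiv> betaLS X y"
  shows "agl_obj X grp \<gamma> y b = 1/2 * (y \<bullet> y) + (\<Sum>g\<in>UNIV.
     (\<Sum>j\<in>{j. grp j = g}. 1/2 * (b $ j)\<^sup>2 - z $ j * b $ j)
     + \<gamma> / sqrt (gnorm_sq grp z g) * sqrt (\<Sum>j\<in>{j. grp j = g}. (b $ j)\<^sup>2))"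
proof -
  have "(X *v b) \<bullet> (X *v b) = b \<bullet> b"
    by (simp add: inner_matrix_vector_mult matrix_vector_mul_assoc XX)
  then have "(norm (y - X *v b))\<^sup>2 = y \<bullet> y - 2 * (z \<bullet> b) + b \<bullet> b"
    by (simp add: power2_norm_eq_inner inner_diff_left inner_diff_right inner_matrix_vector_mult
        z_def betaLS_def inner_commute)
  also have "\<dots> = y \<bullet> y + 2 * (\<Sum>j\<in>UNIV. 1/2 * (b $ j)\<^sup>2 - z $ j * b $ j)"
    by (simp add: inner_vec_def sum_subtractf sum_distrib_left power2_eq_square)
  finally have "(norm (y - X *v b))\<^sup>2 = y \<bullet> y + 2 * (\<Sum>j\<in>UNIV. 1/2 * (b $ j)\<^sup>2 - z $ j * b $ j)" .
  then show ?thesis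
    unfolding agl_obj_def agl_weight_def gnorm_eq_sqrt_gnorm_sq sum_UNIV_by_group[of _ grp]
    by (simp add: z_def gnorm_sq_def sum.distrib sum_distrib_left algebra_simps)
qed

lemma agl_obj_closed_form_excess:
  fixes X :: "real^'p::finite^'n::finite" and grp :: "'p \<Rightarrow> 'g::finite"
  assumes XX: "transpose X ** X = mat 1" and \<gamma>: "0 < \<gamma>"
  shows "agl_obj X grp \<gamma> y (agl_closed_form X grp \<gamma> y)
      + 1/2 * (\<Sum>j\<in>UNIV. (b $ j - agl_closed_form X grp \<gamma> y $ j)\<^sup>2) \<le> agl_obj X grp \<gamma> y b"
proof -
  let ?z = "betaLS X y" and ?b = "agl_closed_form X grp \<gamma> y"
  have "(\<Sum>j\<in>{j. grp j = g}. 1/2 * (?b $ j)\<^sup>2 - ?z $ j * ?b $ j)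
      + \<gamma> / sqrt (gnorm_sq grp ?z g) * sqrt (\<Sum>j\<in>{j. grp j = g}. (?b $ j)\<^sup>2)
      + 1/2 * (\<Sum>j\<in>{j. grp j = g}. (b $ j - ?b $ j)\<^sup>2)
    \<le> (\<Sum>j\<in>{j. grp j = g}. 1/2 * (b $ j)\<^sup>2 - ?z $ j * b $ j)
      + \<gamma> / sqrt (gnorm_sq grp ?z g) * sqrt (\<Sum>j\<in>{j. grp j = g}. (b $ j)\<^sup>2)" for g
  proof -
    let ?c = "shrinkage \<gamma> (gnorm_sq grp ?z g)"
    have "?b $ j = ?c * ?z $ j" if "j \<in> {j. grp j = g}" for j
      using that by (simp add: agl_closed_form_nth)
    then have "(\<Sum>j\<in>{j. grp j = g}. 1/2 * (?b $ j)\<^sup>2 - ?z $ j * ?b $ j)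
        = (\<Sum>j\<in>{j. grp j = g}. 1/2 * (?c * ?z $ j)\<^sup>2 - ?z $ j * (?c * ?z $ j))"
      "(\<Sum>j\<in>{j. grp j = g}. (?b $ j)\<^sup>2) = (\<Sum>j\<in>{j. grp j = g}. (?c * ?z $ j)\<^sup>2)"
      "(\<Sum>j\<in>{j. grp j = g}. (b $ j - ?b $ j)\<^sup>2) = (\<Sum>j\<in>{j. grp j = g}. (b $ j - ?c * ?z $ j)\<^sup>2)"
      by (auto intro!: sum.cong)
    then show ?thesis
      using group_soft_threshold_optimal[OF \<gamma>, where z = "\<lambda>j. ?z $ j" and J = "{j. grp j = g}"
          and b = "\<lambda>j. b $ j"]
      by (simp add: gnorm_sq_def)
  qed
  then show ?thesis
    unfolding agl_obj_eq_sum_groups[OF XX] sum_UNIV_by_group[of _ grp]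
    by (simp add: sum_distrib_left flip: sum.distrib) (intro sum_mono, simp)
qed

lemma agl_beta_eq_closed_form:
  fixes X :: "real^'p::finite^'n::finite" and grp :: "'p \<Rightarrow> 'g::finite"
  assumes XX: "transpose X ** X = mat 1" and \<gamma>: "0 < \<gamma>"
  shows "agl_beta X grp \<gamma> y = agl_closed_form X grp \<gamma> y"
  unfolding agl_beta_def
proof (rule the_equality)
  let ?b = "agl_closed_form X grp \<gamma> y"
  note excess = agl_obj_closed_form_excess[OF XX \<gamma>, where y = y and grp = grp]
  show "\<forall>b'. agl_obj X grp \<gamma> y ?b \<le> agl_obj X grp \<gamma> y b'"
  proof
    fix b'
    have "0 \<le> (\<Sum>j\<in>UNIV. (b' $ j - ?b $ j)\<^sup>2)" by (simp add: sum_nonneg)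
    then show "agl_obj X grp \<gamma> y ?b \<le> agl_obj X grp \<gamma> y b'" using excess[of b'] by linarith
  qed
  fix b
  assume "\<forall>b'. agl_obj X grp \<gamma> y b \<le> agl_obj X grp \<gamma> y b'"
  then have "agl_obj X grp \<gamma> y b \<le> agl_obj X grp \<gamma> y ?b" ..
  then have "(\<Sum>j\<in>UNIV. (b $ j - ?b $ j)\<^sup>2) \<le> 0"
    using excess[of b] by linarith
  then have "\<forall>j\<in>UNIV. (b $ j - ?b $ j)\<^sup>2 = 0"
    using sum_nonneg_eq_0_iff[of UNIV "\<lambda>j. (b $ j - ?b $ j)\<^sup>2"] by (simp add: antisym sum_nonneg)
  then show "b = ?b" by (simp add: vec_eq_iff)
qed

lemma gnorm_agl_closed_form:
  assumes "0 < \<gamma>"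
  shows "gnorm grp (agl_closed_form X grp \<gamma> y) g
    = shrinkage \<gamma> (gnorm_sq grp (betaLS X y) g) * sqrt (gnorm_sq grp (betaLS X y) g)"
proof -
  let ?c = "shrinkage \<gamma> (gnorm_sq grp (betaLS X y) g)"
  have "gnorm_sq grp (agl_closed_form X grp \<gamma> y) g = ?c\<^sup>2 * gnorm_sq grp (betaLS X y) g"
    unfolding gnorm_sq_def sum_distrib_left
    by (intro sum.cong) (auto simp: agl_closed_form_def power_mult_distrib gnorm_sq_def)
  then show ?thesis
    using shrinkage_bounds[OF assms] by (simp add: gnorm_eq_sqrt_gnorm_sq real_sqrt_mult)
qed

lemma agl_active_eq:
  fixes X :: "real^'p::finite^'n::finite" and grp :: "'p \<Rightarrow> 'g::finite"
  assumes XX: "transpose X ** X = mat 1" and \<gamma>: "0 < \<gamma>"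
  shows "agl_active X grp \<gamma> y = {g. \<gamma> < gnorm_sq grp (betaLS X y) g}"
  using \<gamma> gnorm_sq_nonneg[of grp "betaLS X y"]
  by (auto simp: agl_active_def agl_beta_eq_closed_form[OF XX \<gamma>] gnorm_agl_closed_form shrinkage_def
      field_simps split: if_splits)

section \<open>The trace formula\<close>

lemma matrix_add_rdistrib: "(A + B) ** C = A ** C + B ** (C :: real^'k::finite^'m::finite)"
  for A B :: "real^'m^'n::finite"
  by (simp add: matrix_matrix_mult_def vec_eq_iff sum.distrib algebra_simps)

lemma trace_scaleR: "trace (c *\<^sub>R A) = c * trace (A :: real^'n::finite^'n)"
  by (simp add: trace_def sum_distrib_left)

lemma matrix_inv_eq_right_inverse:
  fixes A B :: "real^'n::finite^'n"
  assumes AB: "A ** B = mat 1"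
  shows "matrix_inv A = B"
proof -
  have BA: "B ** A = mat 1" using AB matrix_left_right_inverse by blast
  have "A ** matrix_inv A = mat 1 \<and> matrix_inv A ** A = mat 1"
    unfolding matrix_inv_def
    by (rule someI[of "\<lambda>A'. A ** A' = mat 1 \<and> A' ** A = mat 1" B]) (simp add: AB BA)
  then have "matrix_inv A = matrix_inv A ** (A ** B)" and "matrix_inv A ** A = mat 1"
    by (simp_all add: AB)
  then show ?thesis by (simp add: matrix_mul_assoc)
qed

lemma matrix_inv_mat1_add_conj:
  fixes Y :: "real^'p::finite^'n::finite" and P N D :: "real^'p^'p"
  assumes YY: "transpose Y ** Y = D" and PD: "P ** D = P"
    and N: "N + \<gamma> *\<^sub>R P + \<gamma> *\<^sub>R (P ** N) = 0"
  shows "matrix_inv (mat 1 + \<gamma> *\<^sub>R (Y ** P ** transpose Y)) = mat 1 + Y ** N ** transpose Y"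
proof (rule matrix_inv_eq_right_inverse)
  have YPD: "Y ** P ** D ** K = Y ** P ** K" for K :: "real^'p^'p"
    by (metis PD matrix_mul_assoc)
  have "(mat 1 + \<gamma> *\<^sub>R (Y ** P ** transpose Y)) ** (mat 1 + Y ** N ** transpose Y)
    = mat 1 + Y ** N ** transpose Y + \<gamma> *\<^sub>R (Y ** P ** transpose Y)
      + \<gamma> *\<^sub>R (Y ** P ** (transpose Y ** Y) ** N ** transpose Y)"
    by (simp add: matrix_add_ldistrib matrix_add_rdistrib matrix_scalar_ac
        scalar_matrix_assoc[symmetric] matrix_mul_assoc add.assoc)
  also have "\<dots> = mat 1 + Y ** (N + \<gamma> *\<^sub>R P + \<gamma> *\<^sub>R (P ** N)) ** transpose Y"
    using YPD by (simp add: YY PD scaleR_add_right matrix_add_ldistrib matrix_add_rdistrib matrix_scalar_ac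
        scalar_matrix_assoc[symmetric] matrix_mul_assoc add.assoc)
  finally show "(mat 1 + \<gamma> *\<^sub>R (Y ** P ** transpose Y)) ** (mat 1 + Y ** N ** transpose Y) = mat 1"
    by (simp add: N)
qed

lemma trace_mat1_add_conj_mult:
  fixes Y :: "real^'p::finite^'n::finite" and N \<Phi> D :: "real^'p^'p"
  assumes YY: "transpose Y ** Y = D" and ND: "N ** D = N" and \<Phi>D: "\<Phi> ** D = \<Phi>"
  shows "trace ((mat 1 + Y ** N ** transpose Y) ** (Y ** transpose Y + \<gamma> *\<^sub>R (Y ** \<Phi> ** transpose Y)))
    = trace D + \<gamma> * trace \<Phi> + trace N + \<gamma> * trace (N ** \<Phi>)"
proof -
  have tr: "trace (Y ** K ** transpose Y) = trace (K ** D)" for K :: "real^'p^'p"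
    by (metis YY matrix_mul_assoc trace_mul_sym)
  have "(mat 1 + Y ** N ** transpose Y) ** (Y ** transpose Y + \<gamma> *\<^sub>R (Y ** \<Phi> ** transpose Y))
     = Y ** transpose Y + \<gamma> *\<^sub>R (Y ** \<Phi> ** transpose Y) + Y ** (N ** D) ** transpose Y
       + \<gamma> *\<^sub>R (Y ** (N ** D ** \<Phi>) ** transpose Y)"
    by (simp add: matrix_add_ldistrib matrix_add_rdistrib matrix_scalar_ac
        scalar_matrix_assoc[symmetric] matrix_mul_assoc add.assoc YY[symmetric] scaleR_add_right)
  moreover have "trace (Y ** transpose Y) = trace D"
    using tr[of "mat 1"] by simp
  moreover have "N ** D ** \<Phi> ** D = N ** \<Phi>"
    by (metis ND \<Phi>D matrix_mul_assoc)
  ultimately show ?thesis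
    by (simp only: trace_add trace_scaleR tr ND \<Phi>D)
qed

definition block_diag :: "('p::finite \<Rightarrow> 'g) \<Rightarrow> 'g set \<Rightarrow> ('p \<Rightarrow> 'p \<Rightarrow> real) \<Rightarrow> real^'p^'p" where
  "block_diag grp A f = (\<chi> j k. if grp j = grp k \<and> grp j \<in> A then f j k else 0)"

lemma block_diag_mult:
  "block_diag grp A f ** block_diag grp A h
     = block_diag grp A (\<lambda>j k. \<Sum>l\<in>{l. grp l = grp j}. f j l * h l k)"
proof -
  have "(block_diag grp A f ** block_diag grp A h) $ j $ k
      = block_diag grp A (\<lambda>j k. \<Sum>l\<in>{l. grp l = grp j}. f j l * h l k) $ j $ k" for j k
  proof -
    have "(block_diag grp A f ** block_diag grp A h) $ j $ k
      = (\<Sum>l\<in>UNIV. if grp l = grp j then (if grp j = grp k \<and> grp j \<in> A then f j l * h l k else 0) else 0)"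
      by (auto simp: block_diag_def matrix_matrix_mult_def intro!: sum.cong)
    also have "\<dots> = (\<Sum>l\<in>{l. grp l = grp j}. if grp j = grp k \<and> grp j \<in> A then f j l * h l k else 0)"
      by (simp add: sum.inter_filter[symmetric])
    also have "\<dots> = block_diag grp A (\<lambda>j k. \<Sum>l\<in>{l. grp l = grp j}. f j l * h l k) $ j $ k"
      by (auto simp: block_diag_def intro!: sum.neutral)
    finally show ?thesis .
  qed
  then show ?thesis by (simp add: vec_eq_iff)
qed

lemma block_diag_add: "block_diag grp A f + block_diag grp A h = block_diag grp A (\<lambda>j k. f j k + h j k)"
  by (auto simp: block_diag_def vec_eq_iff)

lemma block_diag_scaleR: "c *\<^sub>R block_diag grp A f = block_diag grp A (\<lambda>j k. c * f j k)"
  by (auto simp: block_diag_def vec_eq_iff)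

lemma block_diag_cong:
  "(\<And>j k. grp j = grp k \<Longrightarrow> grp j \<in> A \<Longrightarrow> f j k = h j k) \<Longrightarrow> block_diag grp A f = block_diag grp A h"
  by (auto simp: block_diag_def vec_eq_iff)

lemma block_diag_zero: "block_diag grp A (\<lambda>_ _. 0) = 0"
  by (auto simp: block_diag_def vec_eq_iff)

lemma trace_block_diag: "trace (block_diag grp A f) = (\<Sum>j\<in>UNIV. if grp j \<in> A then f j j else 0)"
  by (simp add: block_diag_def trace_def)

lemma block_diag_mult_identity:
  "block_diag grp A f ** block_diag grp A (\<lambda>j k. if j = k then 1 else 0) = block_diag grp A f"
proof -
  have "(\<Sum>l\<in>{l. grp l = grp j}. f j l * (if l = k then 1 else 0)) = f j k" if "grp j = grp k" for j k
    using that by (simp add: if_distrib if_distribR cong: if_cong)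
  then show ?thesis
    unfolding block_diag_mult by (intro block_diag_cong) simp
qed

definition gnormalize :: "('p::finite \<Rightarrow> 'g) \<Rightarrow> real^'p \<Rightarrow> 'p \<Rightarrow> real" where
  "gnormalize grp v j = v $ j / gnorm grp v (grp j)"

lemma sum_gnormalize_sq:
  assumes "gnorm grp v g \<noteq> 0"
  shows "(\<Sum>l\<in>{l. grp l = g}. (gnormalize grp v l)\<^sup>2) = 1"
proof -
  have "(\<Sum>l\<in>{l. grp l = g}. (gnormalize grp v l)\<^sup>2) = (\<Sum>l\<in>{l. grp l = g}. (v $ l)\<^sup>2) / (gnorm grp v g)\<^sup>2"
    by (simp add: gnormalize_def power_divide sum_divide_distrib)
  also have "\<dots> = 1"
    using assms by (simp add: gnorm_eq_sqrt_gnorm_sq gnorm_sq_def sum_nonneg)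
  finally show ?thesis .
qed

lemma sum_rank_one_projection_sq:
  fixes u :: "'a \<Rightarrow> real"
  assumes "finite J" "j \<in> J" "k \<in> J" and u: "(\<Sum>l\<in>J. (u l)\<^sup>2) = 1"
  shows "(\<Sum>l\<in>J. ((if j = l then 1 else 0) - u j * u l) * (u l * u k - (if l = k then 1 else 0)))
    = u j * u k - (if j = k then 1 else 0)"
proof -
  have "(\<Sum>l\<in>J. ((if j = l then 1 else 0) - u j * u l) * (u l * u k - (if l = k then 1 else 0)))
    = (\<Sum>l\<in>J. (if l = j then u l * u k - (if l = k then 1 else 0) else 0)
        - u j * u k * (u l)\<^sup>2 + (if l = k then u j * u l else 0))"
    by (rule sum.cong) (auto simp: algebra_simps power2_eq_square)
  also have "\<dots> = u j * u k - (if j = k then 1 else 0) - u j * u k * (\<Sum>l\<in>J. (u l)\<^sup>2) + u j * u k"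
    using assms(1-3) by (simp add: sum.distrib sum_subtractf sum_distrib_left)
  finally show ?thesis using u by simp
qed

lemma block_diag_inverse_identity:
  fixes u :: "'p::finite \<Rightarrow> real" and S :: "'g \<Rightarrow> real"
  assumes S: "\<And>g. g \<in> A \<Longrightarrow> S g \<noteq> 0 \<and> S g \<noteq> \<gamma>"
    and u: "\<And>g. g \<in> A \<Longrightarrow> (\<Sum>l\<in>{l. grp l = g}. (u l)\<^sup>2) = 1"
  defines "\<delta> \<equiv> \<lambda>j k. if j = k then 1 else 0"
  shows "block_diag grp A (\<lambda>j k. \<gamma> / S (grp j) * (u j * u k - \<delta> j k))
      + \<gamma> *\<^sub>R block_diag grp A (\<lambda>j k. (\<delta> j k - u j * u k) / (S (grp j) - \<gamma>))
      + \<gamma> *\<^sub>R (block_diag grp A (\<lambda>j k. (\<delta> j k - u j * u k) / (S (grp j) - \<gamma>))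
          ** block_diag grp A (\<lambda>j k. \<gamma> / S (grp j) * (u j * u k - \<delta> j k))) = 0"
proof -
  have projection: "(\<Sum>l\<in>{l. grp l = grp j}. (\<delta> j l - u j * u l) * (u l * u k - \<delta> l k)) = u j * u k - \<delta> j k"
    if "grp j = grp k" "grp j \<in> A" for j k
    unfolding \<delta>_def using that by (intro sum_rank_one_projection_sq u) auto
  show ?thesis
    unfolding block_diag_mult block_diag_scaleR block_diag_add
  proof (subst block_diag_zero[symmetric], rule block_diag_cong)
    fix j k assume jk: "grp j = grp k" "grp j \<in> A"
    let ?S = "S (grp j)"
    have "(\<Sum>l\<in>{l. grp l = grp j}. (\<delta> j l - u j * u l) / (?S - \<gamma>) * (\<gamma> / S (grp l) * (u l * u k - \<delta> l k)))
       = (\<Sum>l\<in>{l. grp l = grp j}. \<gamma> / (?S * (?S - \<gamma>)) * ((\<delta> j l - u j * u l) * (u l * u k - \<delta> l k)))"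
      by (rule sum.cong) (simp_all add: mult_ac)
    also have "\<dots> = \<gamma> / (?S * (?S - \<gamma>)) * (u j * u k - \<delta> j k)"
      by (simp only: projection[OF jk, symmetric] sum_distrib_left)
    finally have sum: "(\<Sum>l\<in>{l. grp l = grp j}. (\<delta> j l - u j * u l) / (?S - \<gamma>) * (\<gamma> / S (grp l) * (u l * u k - \<delta> l k)))
       = \<gamma> / (?S * (?S - \<gamma>)) * (u j * u k - \<delta> j k)" .
    have "?S \<noteq> 0" "?S - \<gamma> \<noteq> 0" using S[OF jk(2)] by auto
    then show "\<gamma> / ?S * (u j * u k - \<delta> j k) + \<gamma> * ((\<delta> j k - u j * u k) / (?S - \<gamma>))
        + \<gamma> * (\<Sum>l\<in>{l. grp l = grp j}. (\<delta> j l - u j * u l) / (?S - \<gamma>)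
            * (\<gamma> / S (grp l) * (u l * u k - \<delta> l k))) = 0"
      unfolding sum by (simp add: field_simps)
  qed
qed

lemma trace_block_diag_rank_one_mult:
  fixes u :: "'p::finite \<Rightarrow> real" and S :: "'g \<Rightarrow> real"
  assumes u: "\<And>g. g \<in> A \<Longrightarrow> (\<Sum>l\<in>{l. grp l = g}. (u l)\<^sup>2) = 1"
  shows "trace (block_diag grp A (\<lambda>j k. c (grp j) * (u j * u k - (if j = k then 1 else 0)))
      ** block_diag grp A (\<lambda>j k. u j * u k / S (grp j))) = 0"
proof -
  have "(\<Sum>l\<in>{l. grp l = grp j}. c (grp j) * (u j * u l - (if j = l then 1 else 0)) * (u l * u j / S (grp l))) = 0"
    if "grp j \<in> A" for j
  proof -
    have "(\<Sum>l\<in>{l. grp l = grp j}. c (grp j) * (u j * u l - (if j = l then 1 else 0)) * (u l * u j / S (grp l)))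
      = (\<Sum>l\<in>{l. grp l = grp j}. c (grp j) * (u j)\<^sup>2 / S (grp j) * (u l)\<^sup>2
          - (if l = j then c (grp j) * (u j)\<^sup>2 / S (grp j) else 0))"
      by (rule sum.cong) (auto simp: power2_eq_square algebra_simps diff_divide_distrib)
    also have "\<dots> = c (grp j) * (u j)\<^sup>2 / S (grp j) * ((\<Sum>l\<in>{l. grp l = grp j}. (u l)\<^sup>2) - 1)"
      by (simp add: sum_subtractf sum_distrib_left right_diff_distrib)
    finally show ?thesis using u[OF that] by simp
  qed
  then show ?thesis
    unfolding block_diag_mult trace_block_diag by (intro sum.neutral) simp
qed

lemma gram_XA:
  fixes X :: "real^'p::finite^'n::finite" and grp :: "'p \<Rightarrow> 'g::finite"
  assumes XX: "transpose X ** X = mat 1"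
  shows "transpose (XA X grp \<gamma> y) ** XA X grp \<gamma> y
    = block_diag grp (agl_active X grp \<gamma> y) (\<lambda>j k. if j = k then 1 else 0)"
proof -
  have "(transpose (XA X grp \<gamma> y) ** XA X grp \<gamma> y) $ j $ k
      = (if grp j \<in> agl_active X grp \<gamma> y \<and> grp k \<in> agl_active X grp \<gamma> y then (transpose X ** X) $ j $ k else 0)"
    for j k
    by (cases "grp j \<in> agl_active X grp \<gamma> y"; cases "grp k \<in> agl_active X grp \<gamma> y")
      (simp_all add: XA_def matrix_matrix_mult_def transpose_def)
  then show ?thesis
    by (auto simp: XX vec_eq_iff block_diag_def mat_def)
qed

lemma PiA_eq_block_diag:
  fixes X :: "real^'p::finite^'n::finite" and grp :: "'p \<Rightarrow> 'g::finite" and y :: "real^'n"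
  assumes XX: "transpose X ** X = mat 1" and \<gamma>: "0 < \<gamma>"
  defines "S \<equiv> gnorm_sq grp (betaLS X y)" and "u \<equiv> gnormalize grp (betaLS X y)"
  shows "PiA X grp \<gamma> y = block_diag grp (agl_active X grp \<gamma> y)
      (\<lambda>j k. ((if j = k then 1 else 0) - u j * u k) / (S (grp j) - \<gamma>))"
proof -
  have "PiA X grp \<gamma> y $ j $ k = block_diag grp (agl_active X grp \<gamma> y)
      (\<lambda>j k. ((if j = k then 1 else 0) - u j * u k) / (S (grp j) - \<gamma>)) $ j $ k" for j k
  proof (cases "grp j = grp k \<and> grp j \<in> agl_active X grp \<gamma> y")
    case True
    then have gk: "grp k = grp j" and aj: "grp j \<in> agl_active X grp \<gamma> y"
      and act: "\<gamma> < S (grp j)"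
      by (auto simp: agl_active_eq[OF XX \<gamma>] S_def)
    define s where "s = gnorm grp (betaLS X y) (grp j)"
    define c where "c = shrinkage \<gamma> (S (grp j))"
    have s: "0 < s" and Ss: "S (grp j) = s\<^sup>2"
      using act \<gamma> by (simp_all add: s_def S_def gnorm_eq_sqrt_gnorm_sq)
    have c: "0 < c"
      using act \<gamma> by (simp add: c_def shrinkage_def field_simps)
    have cS: "S (grp j) - \<gamma> = c * s\<^sup>2"
      unfolding Ss[symmetric] using act \<gamma> by (simp add: c_def shrinkage_def field_simps)
    have bh: "gnorm grp (agl_closed_form X grp \<gamma> y) (grp j) = c * s"
      using gnorm_agl_closed_form[OF \<gamma>] by (simp add: c_def s_def S_def gnorm_eq_sqrt_gnorm_sq)
    have bh_nth: "agl_closed_form X grp \<gamma> y $ l = c * betaLS X y $ l" if "grp l = grp j" for l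
      using that by (simp add: agl_closed_form_nth c_def S_def)
    have uu: "u j * u k = betaLS X y $ j * betaLS X y $ k / s\<^sup>2"
      using gk by (simp add: u_def gnormalize_def s_def power2_eq_square)
    have "PiA X grp \<gamma> y $ j $ k = agl_weight X grp y (grp j) *
        ((if j = k then 1 else 0) / gnorm grp (agl_closed_form X grp \<gamma> y) (grp j)
          - agl_closed_form X grp \<gamma> y $ j * agl_closed_form X grp \<gamma> y $ k
            / gnorm grp (agl_closed_form X grp \<gamma> y) (grp j) ^ 3)"
      using gk aj by (simp add: PiA_def Let_def agl_beta_eq_closed_form[OF XX \<gamma>])
    also have "\<dots> = 1 / s * ((if j = k then 1 else 0) / (c * s)
        - (c * betaLS X y $ j) * (c * betaLS X y $ k) / (c * s) ^ 3)"
      using gk by (simp add: agl_weight_def bh bh_nth flip: s_def)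
    also have "\<dots> = ((if j = k then 1 else 0) - u j * u k) / (S (grp j) - \<gamma>)"
      unfolding cS uu using s c by (simp add: field_simps power2_eq_square power3_eq_cube)
    finally show ?thesis
      using gk aj by (simp add: block_diag_def)
  next
    case False
    then show ?thesis by (auto simp: PiA_def Let_def block_diag_def)
  qed
  then show ?thesis by (simp add: vec_eq_iff)
qed

lemma PhiA_eq_block_diag:
  fixes X :: "real^'p::finite^'n::finite" and grp :: "'p \<Rightarrow> 'g::finite" and y :: "real^'n"
  assumes XX: "transpose X ** X = mat 1" and \<gamma>: "0 < \<gamma>"
  defines "S \<equiv> gnorm_sq grp (betaLS X y)" and "u \<equiv> gnormalize grp (betaLS X y)"
  shows "PhiA X grp \<gamma> y = block_diag grp (agl_active X grp \<gamma> y) (\<lambda>j k. u j * u k / S (grp j))"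
proof -
  have "PhiA X grp \<gamma> y $ j $ k = block_diag grp (agl_active X grp \<gamma> y) (\<lambda>j k. u j * u k / S (grp j)) $ j $ k"
    for j k
  proof (cases "grp j = grp k \<and> grp j \<in> agl_active X grp \<gamma> y")
    case True
    then have gk: "grp k = grp j" and aj: "grp j \<in> agl_active X grp \<gamma> y"
      and act: "\<gamma> < S (grp j)"
      by (auto simp: agl_active_eq[OF XX \<gamma>] S_def)
    define s where "s = gnorm grp (betaLS X y) (grp j)"
    define c where "c = shrinkage \<gamma> (S (grp j))"
    have s: "0 < s" and Ss: "S (grp j) = s\<^sup>2"
      using act \<gamma> by (simp_all add: s_def S_def gnorm_eq_sqrt_gnorm_sq)
    have c: "0 < c"
      using act \<gamma> by (simp add: c_def shrinkage_def field_simps)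
    have bh: "gnorm grp (agl_closed_form X grp \<gamma> y) (grp j) = c * s"
      using gnorm_agl_closed_form[OF \<gamma>] by (simp add: c_def s_def S_def gnorm_eq_sqrt_gnorm_sq)
    have uu: "u j * u k = betaLS X y $ j * betaLS X y $ k / s\<^sup>2"
      using gk by (simp add: u_def gnormalize_def s_def power2_eq_square)
    have "PhiA X grp \<gamma> y $ j $ k = agl_closed_form X grp \<gamma> y $ j / gnorm grp (agl_closed_form X grp \<gamma> y) (grp j)
        * (betaLS X y $ k / gnorm grp (betaLS X y) (grp j) ^ 3)"
      using gk aj by (simp add: PhiA_def Let_def agl_beta_eq_closed_form[OF XX \<gamma>])
    also have "\<dots> = (c * betaLS X y $ j / (c * s)) * (betaLS X y $ k / s ^ 3)"
      by (simp add: bh agl_closed_form_nth flip: s_def c_def S_def)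
    also have "\<dots> = u j * u k / S (grp j)"
      unfolding Ss uu using s c by (simp add: field_simps power2_eq_square power3_eq_cube)
    finally show ?thesis
      using gk aj by (simp add: block_diag_def)
  next
    case False
    then show ?thesis by (auto simp: PhiA_def Let_def block_diag_def)
  qed
  then show ?thesis by (simp add: vec_eq_iff)
qed

definition agl_divergence :: "real^'p^'n \<Rightarrow> ('p::finite \<Rightarrow> 'g) \<Rightarrow> real \<Rightarrow> real^'n \<Rightarrow> real" where
  "agl_divergence X grp \<gamma> y = (\<Sum>j\<in>UNIV.
     if \<gamma> < gnorm_sq grp (betaLS X y) (grp j)
     then 1 - \<gamma> / gnorm_sq grp (betaLS X y) (grp j)
       + 2 * \<gamma> * (betaLS X y $ j)\<^sup>2 / (gnorm_sq grp (betaLS X y) (grp j))\<^sup>2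
     else 0)"

lemma dfhat_eq_agl_divergence:
  fixes X :: "real^'p::finite^'n::finite" and grp :: "'p \<Rightarrow> 'g::finite"
  assumes XX: "transpose X ** X = mat 1" and \<gamma>: "0 < \<gamma>"
  shows "dfhat X grp \<gamma> y = agl_divergence X grp \<gamma> y"
proof -
  define S where "S = gnorm_sq grp (betaLS X y)"
  define u where "u = gnormalize grp (betaLS X y)"
  define A where "A = agl_active X grp \<gamma> y"
  define \<delta> :: "'p \<Rightarrow> 'p \<Rightarrow> real" where "\<delta> j k = (if j = k then 1 else 0)" for j k
  define Y where "Y = XA X grp \<gamma> y"
  define D where "D = block_diag grp A \<delta>"
  define P where "P = block_diag grp A (\<lambda>j k. (\<delta> j k - u j * u k) / (S (grp j) - \<gamma>))"
  define \<Phi> where "\<Phi> = block_diag grp A (\<lambda>j k. u j * u k / S (grp j))"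
  txt \<open>On an active block P = (I - u u^T) / (S - \<gamma>) is a multiple of a projection, and
    N solves (I + \<gamma> P) (I + N) = I there.\<close>
  define N where "N = block_diag grp A (\<lambda>j k. \<gamma> / S (grp j) * (u j * u k - \<delta> j k))"
  have A: "g \<in> A \<longleftrightarrow> \<gamma> < S g" for g
    by (simp add: A_def S_def agl_active_eq[OF XX \<gamma>])
  have u: "(\<Sum>l\<in>{l. grp l = g}. (u l)\<^sup>2) = 1" if "g \<in> A" for g
    unfolding u_def using that A[of g] \<gamma>
    by (intro sum_gnormalize_sq) (simp add: gnorm_eq_sqrt_gnorm_sq S_def)
  have YY: "transpose Y ** Y = D"
    unfolding Y_def D_def A_def \<delta>_def by (rule gram_XA[OF XX])
  have PD: "P ** D = P" and ND: "N ** D = N" and \<Phi>D: "\<Phi> ** D = \<Phi>"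
    unfolding P_def N_def \<Phi>_def D_def \<delta>_def by (simp_all only: block_diag_mult_identity)
  have "N + \<gamma> *\<^sub>R P + \<gamma> *\<^sub>R (P ** N) = 0"
    unfolding N_def P_def \<delta>_def by (rule block_diag_inverse_identity) (use A u \<gamma> in force)+
  then have inv: "matrix_inv (mat 1 + \<gamma> *\<^sub>R (Y ** P ** transpose Y)) = mat 1 + Y ** N ** transpose Y"
    by (rule matrix_inv_mat1_add_conj[OF YY PD])
  have "dfhat X grp \<gamma> y
      = trace ((mat 1 + Y ** N ** transpose Y) ** (Y ** transpose Y + \<gamma> *\<^sub>R (Y ** \<Phi> ** transpose Y)))"
    using inv
    by (simp add: dfhat_def Let_def PiA_eq_block_diag[OF XX \<gamma>] PhiA_eq_block_diag[OF XX \<gamma>]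
        flip: Y_def P_def \<Phi>_def A_def S_def u_def \<delta>_def)
  also have "\<dots> = trace D + \<gamma> * trace \<Phi> + trace N + \<gamma> * trace (N ** \<Phi>)"
    by (rule trace_mat1_add_conj_mult[OF YY ND \<Phi>D])
  also have "trace (N ** \<Phi>) = 0"
    unfolding N_def \<Phi>_def \<delta>_def using u by (rule trace_block_diag_rank_one_mult[where c = "\<lambda>g. \<gamma> / S g"])
  also have "trace D + \<gamma> * trace \<Phi> + trace N + \<gamma> * 0 = (\<Sum>j\<in>UNIV.
      if grp j \<in> A then 1 + \<gamma> * (u j * u j / S (grp j)) + \<gamma> / S (grp j) * (u j * u j - 1) else 0)"
    by (simp add: D_def \<Phi>_def N_def \<delta>_def trace_block_diag sum_distrib_left if_distrib
        flip: sum.distrib cong: if_cong)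
  also have "\<dots> = agl_divergence X grp \<gamma> y"
    unfolding agl_divergence_def
  proof (rule sum.cong)
    fix j :: 'p
    have "u j * u j = (betaLS X y $ j)\<^sup>2 / S (grp j)"
      using gnorm_sq_nonneg[of grp "betaLS X y" "grp j"]
      by (simp add: u_def gnormalize_def gnorm_eq_sqrt_gnorm_sq S_def power2_eq_square)
    then show "(if grp j \<in> A then 1 + \<gamma> * (u j * u j / S (grp j)) + \<gamma> / S (grp j) * (u j * u j - 1) else 0)
      = (if \<gamma> < gnorm_sq grp (betaLS X y) (grp j) then 1 - \<gamma> / gnorm_sq grp (betaLS X y) (grp j)
          + 2 * \<gamma> * (betaLS X y $ j)\<^sup>2 / (gnorm_sq grp (betaLS X y) (grp j))\<^sup>2 else 0)"
      using A[of "grp j"] \<gamma> by (auto simp: S_def field_simps power2_eq_square)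
  qed simp
  finally show ?thesis .
qed

section \<open>Divergence of the fitted values\<close>

lemma betaLS_add_axis:
  "betaLS X (y + t *\<^sub>R axis i 1) $ j = betaLS X y $ j + t * X $ i $ j"
  for X :: "real^'p::finite^'n::finite"
  by (simp add: betaLS_def matrix_vector_right_distrib matrix_vector_mult_scaleR matrix_vector_mult_basis
      column_def transpose_def)

lemma finite_quadratic_roots:
  fixes a b c :: real
  assumes "a \<noteq> 0"
  shows "finite {t. a * t\<^sup>2 + b * t + c = 0}"
proof -
  have "{t. a * t\<^sup>2 + b * t + c = 0}
      \<subseteq> {(-b + sqrt (discrim a b c)) / (2 * a), (-b - sqrt (discrim a b c)) / (2 * a)}"
    using discriminant_iff[OF assms] by auto
  then show ?thesis by (rule finite_subset) simp
qed

lemma shrinkage_comp_has_real_derivative: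
  assumes \<gamma>: "0 < \<gamma>" and q: "\<And>s. (q has_real_derivative q' s) (at s)" and t: "q t \<noteq> \<gamma>"
  shows "((\<lambda>s. shrinkage \<gamma> (q s)) has_real_derivative
      (if \<gamma> < q t then \<gamma> * q' t / (q t)\<^sup>2 else 0)) (at t)"
proof -
  have q_cont: "continuous_on UNIV q" by (rule DERIV_continuous_on) (rule q)
  show ?thesis
  proof (cases "\<gamma> < q t")
    case True
    have "((\<lambda>s. 1 - \<gamma> / q s) has_real_derivative \<gamma> * q' t / (q t)\<^sup>2) (at t)"
      using True \<gamma> by (auto intro!: derivative_eq_intros q simp: power2_eq_square field_simps)
    then have "((\<lambda>s. shrinkage \<gamma> (q s)) has_real_derivative \<gamma> * q' t / (q t)\<^sup>2) (at t)"
    proof (rule has_field_derivative_transform_within_open)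
      show "open {s. (\<lambda>_. \<gamma>) s < q s}" by (rule open_Collect_less) (auto intro: q_cont)
    qed (use True in \<open>auto simp: shrinkage_def\<close>)
    then show ?thesis using True by simp
  next
    case False
    then have "q t < \<gamma>" using t by simp
    have "((\<lambda>s. 0) has_real_derivative 0) (at t)" by simp
    then have "((\<lambda>s. shrinkage \<gamma> (q s)) has_real_derivative 0) (at t)"
    proof (rule has_field_derivative_transform_within_open)
      show "open {s. q s < (\<lambda>_. \<gamma>) s}" by (rule open_Collect_less) (auto intro: q_cont)
    qed (use \<open>q t < \<gamma>\<close> in \<open>auto simp: shrinkage_def\<close>)
    then show ?thesis using False by simp
  qed
qed

lemma shrinkage_gnorm_sq_line_deriv:
  fixes X :: "real^'p::finite^'n::finite" and grp :: "'p \<Rightarrow> 'g"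
  assumes \<gamma>: "0 < \<gamma>"
  shows "\<exists>E. finite E \<and> (\<forall>t. t \<notin> E \<longrightarrow>
    ((\<lambda>t. shrinkage \<gamma> (gnorm_sq grp (betaLS X (y + t *\<^sub>R axis i 1)) g)) has_real_derivative
      (if \<gamma> < gnorm_sq grp (betaLS X (y + t *\<^sub>R axis i 1)) g
       then \<gamma> * (2 * (\<Sum>k\<in>{k. grp k = g}. X $ i $ k * betaLS X (y + t *\<^sub>R axis i 1) $ k))
         / (gnorm_sq grp (betaLS X (y + t *\<^sub>R axis i 1)) g)\<^sup>2
       else 0)) (at t))"
  (is "\<exists>E. finite E \<and> (\<forall>t. t \<notin> E \<longrightarrow> ((\<lambda>t. shrinkage \<gamma> (?S t)) has_real_derivative ?d t) (at t))")
proof -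
  let ?J = "{k. grp k = g}"
  define a where "a k = betaLS X y $ k" for k
  define x where "x k = X $ i $ k" for k
  have S_eq: "?S t = (\<Sum>k\<in>?J. (a k + t * x k)\<^sup>2)" for t
    by (simp add: gnorm_sq_def betaLS_add_axis a_def x_def)
  have S': "(?S has_real_derivative 2 * (\<Sum>k\<in>?J. X $ i $ k * betaLS X (y + t *\<^sub>R axis i 1) $ k)) (at t)" for t
    unfolding S_eq[abs_def] by (auto intro!: derivative_eq_intros simp: sum_distrib_left algebra_simps
        betaLS_add_axis a_def x_def)
  show ?thesis
  proof (cases "\<forall>k\<in>?J. x k = 0")
    case True
    then have "?S t = ?S 0" for t unfolding S_eq by simp
    then have "(\<lambda>t. shrinkage \<gamma> (?S t)) = (\<lambda>_. shrinkage \<gamma> (?S 0))"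
      by (intro ext) (rule arg_cong)
    then have "((\<lambda>t. shrinkage \<gamma> (?S t)) has_real_derivative 0) (at t)" for t
      by simp
    moreover have "(\<Sum>k\<in>?J. X $ i $ k * betaLS X (y + t *\<^sub>R axis i 1) $ k) = 0" for t
      using True by (simp add: x_def)
    ultimately show ?thesis by auto
  next
    case False
    define A where "A = (\<Sum>k\<in>?J. (x k)\<^sup>2)"
    have "A \<noteq> 0"
    proof
      assume "A = 0"
      then have "\<forall>k\<in>?J. (x k)\<^sup>2 = 0" unfolding A_def by (subst sum_nonneg_eq_0_iff[symmetric]) auto
      then show False using False by simp
    qed
    have "{t. ?S t = \<gamma>} = {t. A * t\<^sup>2 + 2 * (\<Sum>k\<in>?J. a k * x k) * t + ((\<Sum>k\<in>?J. (a k)\<^sup>2) - \<gamma>) = 0}"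
      by (simp add: S_eq A_def power2_sum sum.distrib sum_distrib_left sum_distrib_right algebra_simps
          power_mult_distrib)
    then have "finite {t. ?S t = \<gamma>}"
      using finite_quadratic_roots[OF \<open>A \<noteq> 0\<close>] by simp
    moreover have "((\<lambda>t. shrinkage \<gamma> (?S t)) has_real_derivative ?d t) (at t)" if "t \<notin> {t. ?S t = \<gamma>}" for t
      using shrinkage_comp_has_real_derivative[OF \<gamma> S', of t] that by simp
    ultimately show ?thesis by blast
  qed
qed

text \<open>The product rule applied to yhat_i = \<Sum>_j X_ij shrinkage \<gamma> ||z_g(j)||^2 z_j with z = X^T y:
  the partial derivative of yhat_i in y_i away from the kinks ||z_g||^2 = \<gamma>.\<close>
definition agl_fit_deriv :: "real^'p^'n \<Rightarrow> ('p::finite \<Rightarrow> 'g) \<Rightarrow> real \<Rightarrow> 'n \<Rightarrow> real^'n \<Rightarrow> real" where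
  "agl_fit_deriv X grp \<gamma> i y = (\<Sum>j\<in>UNIV. X $ i $ j *
     (X $ i $ j * shrinkage \<gamma> (gnorm_sq grp (betaLS X y) (grp j))
      + betaLS X y $ j * (if \<gamma> < gnorm_sq grp (betaLS X y) (grp j)
          then \<gamma> * (2 * (\<Sum>k\<in>{k. grp k = grp j}. X $ i $ k * betaLS X y $ k))
            / (gnorm_sq grp (betaLS X y) (grp j))\<^sup>2
          else 0)))"

lemma agl_closed_form_fit_line_deriv:
  fixes X :: "real^'p::finite^'n::finite" and grp :: "'p \<Rightarrow> 'g::finite"
  assumes \<gamma>: "0 < \<gamma>"
  shows "\<exists>E. finite E \<and> (\<forall>t. t \<notin> E \<longrightarrow>
    ((\<lambda>t. (X *v agl_closed_form X grp \<gamma> (y + t *\<^sub>R axis i 1)) $ i) has_real_derivative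
      agl_fit_deriv X grp \<gamma> i (y + t *\<^sub>R axis i 1)) (at t))"
proof -
  let ?y = "\<lambda>t. y + t *\<^sub>R axis i 1"
  let ?S = "\<lambda>g t. gnorm_sq grp (betaLS X (?y t)) g"
  let ?d = "\<lambda>g t. if \<gamma> < ?S g t
      then \<gamma> * (2 * (\<Sum>k\<in>{k. grp k = g}. X $ i $ k * betaLS X (?y t) $ k)) / (?S g t)\<^sup>2 else 0"
  have "\<forall>g. \<exists>E. finite E \<and> (\<forall>t. t \<notin> E \<longrightarrow>
      ((\<lambda>t. shrinkage \<gamma> (?S g t)) has_real_derivative ?d g t) (at t))"
    by (intro allI shrinkage_gnorm_sq_line_deriv[OF \<gamma>])
  from choice[OF this] obtain E where E: "\<And>g. finite (E g)"
    and E': "\<And>g t. t \<notin> E g \<Longrightarrow> ((\<lambda>t. shrinkage \<gamma> (?S g t)) has_real_derivative ?d g t) (at t)"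
    by blast
  have "((\<lambda>t. (X *v agl_closed_form X grp \<gamma> (?y t)) $ i) has_real_derivative
      agl_fit_deriv X grp \<gamma> i (?y t)) (at t)" if t: "t \<notin> (\<Union>g. E g)" for t
  proof -
    have z': "((\<lambda>t. betaLS X (?y t) $ j) has_real_derivative X $ i $ j) (at t)" for j
      unfolding betaLS_add_axis by (auto intro!: derivative_eq_intros)
    have "((\<lambda>t. \<Sum>j\<in>UNIV. X $ i $ j * (shrinkage \<gamma> (?S (grp j) t) * betaLS X (?y t) $ j))
        has_real_derivative (\<Sum>j\<in>UNIV. X $ i $ j *
          (?d (grp j) t * betaLS X (?y t) $ j + X $ i $ j * shrinkage \<gamma> (?S (grp j) t)))) (at t)"
    proof (rule DERIV_sum)
      fix j
      have "t \<notin> E (grp j)" using t by blast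
      then show "((\<lambda>t. X $ i $ j * (shrinkage \<gamma> (?S (grp j) t) * betaLS X (?y t) $ j)) has_real_derivative
          X $ i $ j * (?d (grp j) t * betaLS X (?y t) $ j + X $ i $ j * shrinkage \<gamma> (?S (grp j) t))) (at t)"
        by (intro DERIV_cmult DERIV_mult E' z')
    qed
    moreover have "(\<Sum>j\<in>UNIV. X $ i $ j *
          (?d (grp j) t * betaLS X (?y t) $ j + X $ i $ j * shrinkage \<gamma> (?S (grp j) t)))
        = agl_fit_deriv X grp \<gamma> i (?y t)"
      unfolding agl_fit_deriv_def by (intro sum.cong refl) (simp add: algebra_simps)
    ultimately show ?thesis
      by (simp add: matrix_vector_mult_def agl_closed_form_nth)
  qed
  then show ?thesis
    using E by (intro exI[of _ "\<Union>g. E g"]) auto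
qed

lemma continuous_on_shrinkage_comp:
  assumes \<gamma>: "0 < \<gamma>" and f: "continuous_on A f"
  shows "continuous_on A (\<lambda>x. shrinkage \<gamma> (f x))"
proof -
  have "max \<gamma> (f x) \<noteq> 0" for x
    using \<gamma> max.cobounded1[of \<gamma> "f x"] by linarith
  then have "continuous_on A (\<lambda>x. 1 - \<gamma> / max \<gamma> (f x))"
    by (intro continuous_intros f) auto
  moreover have "shrinkage \<gamma> q = 1 - \<gamma> / max \<gamma> q" for q
    using \<gamma> by (auto simp: shrinkage_def max_def)
  ultimately show ?thesis by simp
qed

lemma continuous_on_agl_closed_form_fit:
  assumes "0 < \<gamma>"
  shows "continuous_on UNIV (\<lambda>y. (X *v agl_closed_form X grp \<gamma> y) $ i)"
  unfolding matrix_vector_mult_def agl_closed_form_nth gnorm_sq_def betaLS_def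
  using assms by (auto intro!: continuous_intros continuous_on_shrinkage_comp)

lemma sum_column_products:
  fixes X :: "real^'p::finite^'n::finite"
  assumes XX: "transpose X ** X = mat 1"
  shows "(\<Sum>i\<in>UNIV. X $ i $ j * X $ i $ k) = (if j = k then 1 else 0)"
proof -
  have "(transpose X ** X) $ j $ k = (\<Sum>i\<in>UNIV. X $ i $ j * X $ i $ k)"
    by (simp add: matrix_matrix_mult_def transpose_def)
  then show ?thesis using XX by (simp add: mat_def)
qed

lemma abs_entry_le_1:
  fixes X :: "real^'p::finite^'n::finite"
  assumes XX: "transpose X ** X = mat 1"
  shows "\<bar>X $ i $ j\<bar> \<le> 1"
proof -
  have "(X $ i $ j)\<^sup>2 \<le> (\<Sum>i\<in>UNIV. (X $ i $ j)\<^sup>2)"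
    by (rule member_le_sum) auto
  also have "\<dots> = 1"
    using sum_column_products[OF XX, of j j] by (simp add: power2_eq_square)
  finally show ?thesis by (simp add: abs_square_le_1)
qed

lemma abs_le_sqrt_gnorm_sq: "\<bar>v $ j\<bar> \<le> sqrt (gnorm_sq grp v (grp j))"
proof -
  have "(v $ j)\<^sup>2 \<le> gnorm_sq grp v (grp j)"
    unfolding gnorm_sq_def by (rule member_le_sum) auto
  then show ?thesis by (metis real_sqrt_abs real_sqrt_le_mono)
qed

lemma norm_matrix_vector_mult_orthonormal:
  fixes X :: "real^'p::finite^'n::finite"
  assumes XX: "transpose X ** X = mat 1"
  shows "norm (X *v b) = norm b"
  unfolding norm_eq_sqrt_inner
  by (simp add: inner_matrix_vector_mult matrix_vector_mul_assoc XX)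

lemma norm_transpose_matrix_vector_mult_le:
  fixes X :: "real^'p::finite^'n::finite"
  assumes XX: "transpose X ** X = mat 1"
  shows "norm (transpose X *v y) \<le> norm y"
proof -
  have "(norm (transpose X *v y))\<^sup>2 = y \<bullet> (X *v (transpose X *v y))"
    by (simp add: inner_matrix_vector_mult power2_norm_eq_inner)
  also have "\<dots> \<le> norm y * norm (transpose X *v y)"
    using Cauchy_Schwarz_ineq2[of y] norm_matrix_vector_mult_orthonormal[OF XX] by (metis abs_le_D1)
  finally show ?thesis
    by (cases "norm (transpose X *v y) = 0") (simp_all add: power2_eq_square)
qed

lemma abs_agl_closed_form_fit_le:
  fixes X :: "real^'p::finite^'n::finite"
  assumes XX: "transpose X ** X = mat 1" and \<gamma>: "0 < \<gamma>"
  shows "\<bar>(X *v agl_closed_form X grp \<gamma> y) $ i\<bar> \<le> norm y"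
proof -
  have "norm (agl_closed_form X grp \<gamma> y) \<le> norm (betaLS X y)"
    unfolding norm_le inner_vec_def inner_real_def
  proof (intro sum_mono)
    fix j
    let ?c = "shrinkage \<gamma> (gnorm_sq grp (betaLS X y) (grp j))"
    have "(agl_closed_form X grp \<gamma> y $ j)\<^sup>2 = ?c\<^sup>2 * (betaLS X y $ j)\<^sup>2"
      by (simp add: agl_closed_form_nth power_mult_distrib)
    also have "\<dots> \<le> 1 * (betaLS X y $ j)\<^sup>2"
      using shrinkage_bounds[OF \<gamma>] by (intro mult_right_mono power_le_one) auto
    finally show "agl_closed_form X grp \<gamma> y $ j * agl_closed_form X grp \<gamma> y $ j \<le> betaLS X y $ j * betaLS X y $ j"
      by (simp add: power2_eq_square)
  qed
  then show ?thesis
    using component_le_norm_cart[of "X *v agl_closed_form X grp \<gamma> y" i]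
      norm_matrix_vector_mult_orthonormal[OF XX] norm_transpose_matrix_vector_mult_le[OF XX, of y]
    by (simp add: betaLS_def)
qed

lemma abs_sum_group_le:
  fixes X :: "real^'p::finite^'n::finite"
  assumes XX: "transpose X ** X = mat 1"
  shows "\<bar>\<Sum>k\<in>{k. grp k = g}. X $ i $ k * v $ k\<bar> \<le> real CARD('p) * sqrt (gnorm_sq grp v g)"
proof -
  have "\<bar>\<Sum>k\<in>{k. grp k = g}. X $ i $ k * v $ k\<bar> \<le> (\<Sum>k\<in>{k. grp k = g}. \<bar>X $ i $ k\<bar> * \<bar>v $ k\<bar>)"
    by (rule order_trans[OF sum_abs]) (simp add: abs_mult)
  also have "\<dots> \<le> (\<Sum>k\<in>{k. grp k = g}. 1 * sqrt (gnorm_sq grp v g))"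
    using abs_le_sqrt_gnorm_sq[of v _ grp] abs_entry_le_1[OF XX]
    by (intro sum_mono mult_mono) auto
  also have "\<dots> = real (card {k. grp k = g}) * sqrt (gnorm_sq grp v g)"
    by simp
  also have "\<dots> \<le> real CARD('p) * sqrt (gnorm_sq grp v g)"
    by (intro mult_right_mono) (simp_all add: card_mono)
  finally show ?thesis .
qed

lemma abs_agl_fit_deriv_le:
  fixes X :: "real^'p::finite^'n::finite" and grp :: "'p \<Rightarrow> 'g"
  assumes XX: "transpose X ** X = mat 1" and \<gamma>: "0 < \<gamma>"
  shows "\<bar>agl_fit_deriv X grp \<gamma> i y\<bar> \<le> real CARD('p) * (1 + 2 * real CARD('p))"
proof -
  let ?z = "betaLS X y"
  let ?S = "\<lambda>j. gnorm_sq grp ?z (grp j)"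
  let ?d = "\<lambda>j. if \<gamma> < ?S j then \<gamma> * (2 * (\<Sum>k\<in>{k. grp k = grp j}. X $ i $ k * ?z $ k)) / (?S j)\<^sup>2 else 0"
  have d: "\<bar>?z $ j * ?d j\<bar> \<le> 2 * real CARD('p)" for j
  proof (cases "\<gamma> < ?S j")
    case True
    define s where "s = sqrt (?S j)"
    have s: "0 < s" and ss: "s * s = ?S j"
      using True \<gamma> by (simp_all add: s_def)
    have "\<bar>?z $ j * ?d j\<bar> = \<bar>?z $ j\<bar> * (\<gamma> * (2 * \<bar>\<Sum>k\<in>{k. grp k = grp j}. X $ i $ k * ?z $ k\<bar>) / (?S j)\<^sup>2)"
      using True \<gamma> by (simp add: abs_mult)
    also have "\<dots> \<le> s * (\<gamma> * (2 * (real CARD('p) * s)) / (?S j)\<^sup>2)"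
      using abs_le_sqrt_gnorm_sq[where v = ?z and j = j and grp = grp] \<gamma>
        abs_sum_group_le[OF XX, where grp = grp and g = "grp j" and i = i and v = ?z]
      unfolding s_def by (intro mult_mono divide_right_mono mult_left_mono) auto
    also have "\<dots> = 2 * real CARD('p) * (\<gamma> / ?S j)"
      using s by (simp add: ss[symmetric] field_simps power2_eq_square)
    also have "\<dots> \<le> 2 * real CARD('p) * 1"
      using True \<gamma> by (intro mult_left_mono) auto
    finally show ?thesis by simp
  qed simp
  have triangle: "\<bar>a * (a * c + w)\<bar> \<le> \<bar>a\<bar> * (\<bar>a\<bar> * \<bar>c\<bar> + \<bar>w\<bar>)" for a c w :: real
    using abs_triangle_ineq[of "a * c" w] by (simp add: abs_mult mult_left_mono)
  have summand: "\<bar>X $ i $ j * (X $ i $ j * shrinkage \<gamma> (?S j) + ?z $ j * ?d j)\<bar> \<le> 1 + 2 * real CARD('p)" for j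
  proof -
    have "\<bar>X $ i $ j * (X $ i $ j * shrinkage \<gamma> (?S j) + ?z $ j * ?d j)\<bar>
        \<le> \<bar>X $ i $ j\<bar> * (\<bar>X $ i $ j\<bar> * \<bar>shrinkage \<gamma> (?S j)\<bar> + \<bar>?z $ j * ?d j\<bar>)"
      by (rule triangle)
    also have "\<dots> \<le> 1 * (1 * 1 + 2 * real CARD('p))"
      using abs_entry_le_1[OF XX, of i j] shrinkage_bounds[OF \<gamma>, of "?S j"] d[of j]
      by (intro mult_mono add_mono) auto
    finally show ?thesis by simp
  qed
  have "\<bar>agl_fit_deriv X grp \<gamma> i y\<bar> \<le> (\<Sum>j\<in>UNIV. \<bar>X $ i $ j * (X $ i $ j * shrinkage \<gamma> (?S j) + ?z $ j * ?d j)\<bar>)"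
    unfolding agl_fit_deriv_def by (rule sum_abs)
  also have "\<dots> \<le> (\<Sum>j\<in>(UNIV :: 'p set). 1 + 2 * real CARD('p))"
    by (intro sum_mono summand)
  finally show ?thesis by simp
qed

lemma borel_measurable_shrinkage[measurable]: "shrinkage \<gamma> \<in> borel_measurable borel"
  unfolding shrinkage_def by measurable

lemma borel_measurable_betaLS_nth[measurable]: "(\<lambda>y. betaLS X y $ j) \<in> borel_measurable borel"
  by (rule borel_measurable_continuous_onI)
    (auto simp: betaLS_def matrix_vector_mult_def intro!: continuous_intros)

lemma borel_measurable_gnorm_sq_betaLS[measurable]:
  "(\<lambda>y. gnorm_sq grp (betaLS X y) g) \<in> borel_measurable borel"
  unfolding gnorm_sq_def by measurable

lemma borel_measurable_agl_fit_deriv[measurable]: "agl_fit_deriv X grp \<gamma> i \<in> borel_measurable borel"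
  unfolding agl_fit_deriv_def by measurable

lemma sum_agl_fit_deriv:
  fixes X :: "real^'p::finite^'n::finite" and grp :: "'p \<Rightarrow> 'g::finite"
  assumes XX: "transpose X ** X = mat 1"
  shows "(\<Sum>i\<in>UNIV. agl_fit_deriv X grp \<gamma> i y) = agl_divergence X grp \<gamma> y"
proof -
  let ?z = "betaLS X y"
  let ?S = "\<lambda>j. gnorm_sq grp ?z (grp j)"
  have "(\<Sum>i\<in>UNIV. X $ i $ j * (X $ i $ j * shrinkage \<gamma> (?S j) + ?z $ j * (if \<gamma> < ?S j
        then \<gamma> * (2 * (\<Sum>k\<in>{k. grp k = grp j}. X $ i $ k * ?z $ k)) / (?S j)\<^sup>2 else 0)))
     = (if \<gamma> < ?S j then 1 - \<gamma> / ?S j + 2 * \<gamma> * (?z $ j)\<^sup>2 / (?S j)\<^sup>2 else 0)" for j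
  proof (cases "\<gamma> < ?S j")
    case True
    have "(\<Sum>i\<in>UNIV. X $ i $ j * (\<Sum>k\<in>{k. grp k = grp j}. X $ i $ k * ?z $ k))
        = (\<Sum>k\<in>{k. grp k = grp j}. (\<Sum>i\<in>UNIV. X $ i $ j * X $ i $ k) * ?z $ k)"
      by (simp add: sum_distrib_left sum_distrib_right mult.assoc sum.swap[where A = "UNIV :: 'n set"])
    also have "\<dots> = ?z $ j"
      by (simp add: sum_column_products[OF XX] if_distrib if_distribR cong: if_cong)
    finally have c2: "(\<Sum>i\<in>UNIV. X $ i $ j * (\<Sum>k\<in>{k. grp k = grp j}. X $ i $ k * ?z $ k)) = ?z $ j" .
    have c1: "(\<Sum>i\<in>UNIV. X $ i $ j * X $ i $ j) = 1"
      using sum_column_products[OF XX, of j j] by simp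
    have "(\<Sum>i\<in>UNIV. X $ i $ j * (X $ i $ j * shrinkage \<gamma> (?S j)
          + ?z $ j * (\<gamma> * (2 * (\<Sum>k\<in>{k. grp k = grp j}. X $ i $ k * ?z $ k)) / (?S j)\<^sup>2)))
      = shrinkage \<gamma> (?S j) * (\<Sum>i\<in>UNIV. X $ i $ j * X $ i $ j)
        + ?z $ j * (2 * \<gamma> / (?S j)\<^sup>2) * (\<Sum>i\<in>UNIV. X $ i $ j * (\<Sum>k\<in>{k. grp k = grp j}. X $ i $ k * ?z $ k))"
      by (simp add: sum.distrib sum_distrib_left sum_divide_distrib algebra_simps)
    also have "\<dots> = 1 - \<gamma> / ?S j + 2 * \<gamma> * (?z $ j)\<^sup>2 / (?S j)\<^sup>2"
      unfolding c1 c2 using True by (simp add: shrinkage_def power2_eq_square)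
    finally show ?thesis using True by simp
  qed (simp add: shrinkage_def)
  then show ?thesis
    unfolding agl_fit_deriv_def agl_divergence_def by (subst sum.swap) simp
qed

theorem corollary6:
  fixes X :: "real^'p::finite^'n::finite" and grp :: "'p \<Rightarrow> 'g::finite"
    and \<beta> :: "real^'p" and \<sigma> \<gamma> :: real
  assumes "transpose X ** X = mat 1"
    and "\<sigma> > 0" and "\<gamma> > 0"
  shows "integrable (gauss_vec (X *v \<beta>) \<sigma>) (dfhat X grp \<gamma>)
    \<and> (LINT y|gauss_vec (X *v \<beta>) \<sigma>. dfhat X grp \<gamma> y)
        = dof (gauss_vec (X *v \<beta>) \<sigma>) \<sigma> (agl_fit X grp \<gamma>)"
proof -
  note XX = assms(1) and \<sigma> = assms(2) and \<gamma> = assms(3)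
  define G where "G = gauss_vec (X *v \<beta>) \<sigma>"
  define D where "D i = agl_fit_deriv X grp \<gamma> i" for i
  have fit: "agl_fit X grp \<gamma> = (\<lambda>y. X *v agl_closed_form X grp \<gamma> y)"
    by (simp add: fun_eq_iff agl_fit_def agl_beta_eq_closed_form[OF XX \<gamma>])
  have dfhat: "dfhat X grp \<gamma> = (\<lambda>y. \<Sum>i\<in>UNIV. D i y)"
    by (simp add: fun_eq_iff D_def dfhat_eq_agl_divergence[OF XX \<gamma>] sum_agl_fit_deriv[OF XX])
  have growth: "\<bar>(X *v agl_closed_form X grp \<gamma> y) $ i\<bar> \<le> 0 + 1 * norm y" for y i
    using abs_agl_closed_form_fit_le[OF XX \<gamma>] by simp
  have line_cont: "continuous_on UNIV (\<lambda>t. (X *v agl_closed_form X grp \<gamma> (y + t *\<^sub>R axis i 1)) $ i)" for y i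
    by (rule continuous_on_compose2[OF continuous_on_agl_closed_form_fit[OF \<gamma>]]) (auto intro!: continuous_intros)
  note stein = stein_covariance_gauss_vec[OF \<sigma>
      borel_measurable_continuous_onI[OF continuous_on_agl_closed_form_fit[OF \<gamma>]]
      borel_measurable_agl_fit_deriv abs_agl_fit_deriv_le[OF XX \<gamma>] growth line_cont
      agl_closed_form_fit_line_deriv[OF \<gamma>], where \<mu> = "X *v \<beta>", folded G_def D_def]
  have "integrable G (dfhat X grp \<gamma>)"
    unfolding dfhat using stein(1) by (intro Bochner_Integration.integrable_sum)
  moreover have "(\<integral>y. dfhat X grp \<gamma> y \<partial>G) = dof G \<sigma> (agl_fit X grp \<gamma>)"
    using stein \<sigma> by (simp add: dfhat fit dof_def Bochner_Integration.integral_sum sum_distrib_left)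
  ultimately show ?thesis unfolding G_def ..
qed

end
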